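(* Let $X$ be a Dedekind complete Riesz space, $x,y\in X^{s}_{+}$ and $\lambda\in\mathbb{R}_{+}$. Then: (1) $(x+y)^{\infty}=x^{\infty}+y^{\infty}$ and $(\lambda x)^{\infty}=\lambda x^{\infty}$; (2) if $x\le y$ then $x^{\infty}\le y^{\infty}$; (3) $(x\vee y)^{\infty}=x^{\infty}\vee y^{\infty}$ and $(x\wedge y)^{\infty}=x^{\infty}\wedge y^{\infty}$.
   Context: The sup-completion $X^{s}$ of $X$ is the set of classes of nonempty upward directed subsets of $X$ under $A\sim B$ iff $\sup_{a\in A}(x\wedge a)=\sup_{b\in B}(x\wedge b)$ for all $x\in X$, with induced addition, nonnegative scalar multiplication and order; it is a lattice-ordered cone containing $X$ and $X^u_+$ ($X^u$ the universal completion) in which every nonempty subset has a supremum. For a band $B$ of $X$, $\infty_B$ is the supremum of $B$ in $X^s$. Every $x\in X^{s}_{+}$ can be written uniquely as $x=\infty_{B}+u$ with $B$ a band of $X$ and $u\in X^{u}$, $u\perp B$; the infinite part of $x$ is $x^{\infty}:=\infty_{B}$. *)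

theory Defs
  imports Complex_Main
begin

text \<open>Dedekind complete Riesz space: an ordered real vector space which is a lattice in
which every nonempty bounded-above set has a supremum, i.e. a type of class
ordered_real_vector and conditionally_complete_lattice.\<close>

definition rabs :: "'a::{ordered_real_vector, lattice} \<Rightarrow> 'a" where
  "rabs x = sup x (- x)"

definition is_ideal :: "'a::{ordered_real_vector, lattice} set \<Rightarrow> bool" where
  "is_ideal B \<longleftrightarrow> 0 \<in> B \<and> (\<forall>x\<in>B. \<forall>y\<in>B. x + y \<in> B) \<and> (\<forall>c. \<forall>x\<in>B. c *\<^sub>R x \<in> B)
     \<and> (\<forall>x\<in>B. \<forall>y. rabs y \<le> rabs x \<longrightarrow> y \<in> B)"

definition is_band :: "'a::{ordered_real_vector, conditionally_complete_lattice} set \<Rightarrow> bool" where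
  "is_band B \<longleftrightarrow> is_ideal B \<and>
     (\<forall>D. D \<subseteq> B \<and> D \<noteq> {} \<and> bdd_above D \<longrightarrow> Sup D \<in> B)"

subsection \<open>The sup-completion X^s (as a set of equivalence classes)\<close>

definition updir :: "'a::order set \<Rightarrow> bool" where
  "updir A \<longleftrightarrow> A \<noteq> {} \<and> (\<forall>a\<in>A. \<forall>b\<in>A. \<exists>c\<in>A. a \<le> c \<and> b \<le> c)"

definition sc_rel :: "'a::conditionally_complete_lattice set \<Rightarrow> 'a set \<Rightarrow> bool" where
  "sc_rel A B \<longleftrightarrow> (\<forall>x. (SUP a\<in>A. inf x a) = (SUP b\<in>B. inf x b))"

definition sc_class :: "'a::conditionally_complete_lattice set \<Rightarrow> 'a set set" where
  "sc_class A = {B. updir B \<and> sc_rel A B}"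

definition Xs :: "'a::conditionally_complete_lattice set set set" where
  "Xs = {sc_class A | A. updir A}"

definition sc_rep :: "'a::conditionally_complete_lattice set set \<Rightarrow> 'a set" where
  "sc_rep p = (SOME A. A \<in> p)"

definition emb :: "'a::conditionally_complete_lattice \<Rightarrow> 'a set set" where
  "emb x = sc_class {x}"

definition sc_le :: "'a::conditionally_complete_lattice set set \<Rightarrow> 'a set set \<Rightarrow> bool" where
  "sc_le p q \<longleftrightarrow> (\<exists>A B. updir A \<and> updir B \<and> p = sc_class A \<and> q = sc_class B \<and>
       (\<forall>x. (SUP a\<in>A. inf x a) \<le> (SUP b\<in>B. inf x b)))"

definition sc_add :: "'a::{ordered_real_vector, conditionally_complete_lattice} set set
    \<Rightarrow> 'a set set \<Rightarrow> 'a set set" where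
  "sc_add p q = sc_class {a + b | a b. a \<in> sc_rep p \<and> b \<in> sc_rep q}"

definition sc_scale :: "real \<Rightarrow> 'a::{ordered_real_vector, conditionally_complete_lattice} set set
    \<Rightarrow> 'a set set" where
  "sc_scale c p = sc_class ((\<lambda>a. c *\<^sub>R a) ` sc_rep p)"

definition sc_zero :: "'a::{ordered_real_vector, conditionally_complete_lattice} set set" where
  "sc_zero = emb 0"

definition sc_Sup :: "'a::conditionally_complete_lattice set set set \<Rightarrow> 'a set set" where
  "sc_Sup S = (THE z. z \<in> Xs \<and> (\<forall>s\<in>S. sc_le s z) \<and> (\<forall>w\<in>Xs. (\<forall>s\<in>S. sc_le s w) \<longrightarrow> sc_le z w))"

definition sc_Inf :: "'a::conditionally_complete_lattice set set set \<Rightarrow> 'a set set" where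
  "sc_Inf S = (THE z. z \<in> Xs \<and> (\<forall>s\<in>S. sc_le z s) \<and> (\<forall>w\<in>Xs. (\<forall>s\<in>S. sc_le w s) \<longrightarrow> sc_le w z))"

definition sc_sup :: "'a::conditionally_complete_lattice set set \<Rightarrow> 'a set set \<Rightarrow> 'a set set" where
  "sc_sup p q = sc_Sup {p, q}"

definition sc_inf :: "'a::conditionally_complete_lattice set set \<Rightarrow> 'a set set \<Rightarrow> 'a set set" where
  "sc_inf p q = sc_Inf {p, q}"

definition Xs_pos :: "'a::{ordered_real_vector, conditionally_complete_lattice} set set set" where
  "Xs_pos = {p \<in> Xs. sc_le sc_zero p}"

definition infty :: "'a::{ordered_real_vector, conditionally_complete_lattice} set \<Rightarrow> 'a set set" where
  "infty B = sc_Sup (emb ` B)"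

text \<open>Positive elements of the universal completion X^u, viewed inside X^s: the positive elements of X^s dominating no nonzero
  n z (z in X_+) for all n.\<close>
definition Xu_pos :: "'a::{ordered_real_vector, conditionally_complete_lattice} set set set" where
  "Xu_pos = {u \<in> Xs_pos. \<forall>z. 0 \<le> z \<and> (\<forall>n::nat. sc_le (emb (real n *\<^sub>R z)) u) \<longrightarrow> z = 0}"

definition sc_disj_band :: "'a::{ordered_real_vector, conditionally_complete_lattice} set set
    \<Rightarrow> 'a set \<Rightarrow> bool" where
  "sc_disj_band u B \<longleftrightarrow> (\<forall>b\<in>B. sc_inf u (emb (rabs b)) = sc_zero)"

definition inf_part :: "'a::{ordered_real_vector, conditionally_complete_lattice} set set
    \<Rightarrow> 'a set set" where
  "inf_part x = (THE c. \<exists>B u. is_band B \<and> u \<in> Xu_pos \<and> sc_disj_band u B \<and>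
       x = sc_add (infty B) u \<and> c = infty B)"

end

(*
  Every p in X^s is determined by the closed lower set of elements of X below it, and the
  operations of X^s become operations on such sets.  For positive p let B be the band of all z
  with n|z| <= p for every n.  Projecting onto B gives p = \<infinity>_B + u with u disjoint from B,
  and u dominates no nonzero element together with all its multiples; conversely this property
  of u forces B to be the band of infinite elements of \<infinity>_B + u.  So the infinite part of p is
  \<infinity>_B, and monotonicity and compatibility with meets and positive scalars can be read off
  from the formula for B.  For joins, the remainder of |z| after projecting onto the bands of
  x and y is dominated, for every n, by the finite parts applied to n times itself, and an
  Archimedean argument makes it vanish.  Sums reduce to joins because x \<or> y <= x + y <= 2(x \<or> y)
  and \<infinity>_B + \<infinity>_C = \<infinity>_B \<or> \<infinity>_C.
*)
theory Submission
  imports Defs "HOL-Library.Lattice_Algebras" "HOL-Library.Set_Algebras"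
begin

section \<open>Lattice-ordered groups and Riesz spaces\<close>

text \<open>A sort intersection such as \<open>{ordered_ab_group_add, lattice}\<close> is not an instance of the
  class \<open>lattice_ab_group_add\<close>, so its lemmas are obtained through the class predicates.\<close>

lemma lattice_ab_group_add_classes:
  "class.semilattice_sup_ab_group_add (+) (0::'a::{ordered_ab_group_add,lattice}) (-) uminus (\<le>) (<) sup"
  "class.lattice_ab_group_add (+) (0::'a) (-) uminus (\<le>) (<) inf sup"
  by (intro_locales; unfold_locales)+

lemmas lattice_add_sup_distrib_left =
  semilattice_sup_ab_group_add.add_sup_distrib_left[OF lattice_ab_group_add_classes(1)]
lemmas lattice_neg_inf_eq_sup =
  lattice_ab_group_add.neg_inf_eq_sup[OF lattice_ab_group_add_classes(2)]
lemmas lattice_add_eq_inf_sup =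
  lattice_ab_group_add.add_eq_inf_sup[OF lattice_ab_group_add_classes(2)]

lemma disjoint_add_eq_sup: "inf (a::'a::{ordered_ab_group_add,lattice}) b = 0 \<Longrightarrow> a + b = sup a b"
  using lattice_add_eq_inf_sup[of a b] by simp

lemma inf_add_le_add_inf:
  fixes w a b :: "'a::{ordered_ab_group_add,lattice}"
  assumes "0 \<le> w" "0 \<le> a" "0 \<le> b"
  shows "inf w (a + b) \<le> inf w a + inf w b"
proof -
  let ?c = "inf w (a + b)"
  have "?c - inf w a = ?c + sup (- w) (- a)"
    by (simp only: diff_conv_add_uminus lattice_neg_inf_eq_sup)
  also have "\<dots> = sup (?c - w) (?c - a)"
    by (simp add: lattice_add_sup_distrib_left)
  also have "\<dots> \<le> b"
  proof (rule sup_least)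
    show "?c - w \<le> b" using assms by (simp add: le_infI1 order_trans[of _ 0])
    show "?c - a \<le> b" by (simp add: diff_le_eq add.commute le_infI2)
  qed
  finally have "?c - inf w a \<le> b" .
  moreover have "?c - inf w a \<le> w"
    using assms by (simp add: diff_le_eq le_infI1 add_increasing)
  ultimately have "?c - inf w a \<le> inf w b" by (intro inf_greatest)
  then show ?thesis by (simp only: diff_le_eq add.commute)
qed

lemma add_cSUP:
  fixes f :: "'b \<Rightarrow> 'a::{ordered_ab_group_add,conditionally_complete_lattice}"
  assumes "I \<noteq> {}" "bdd_above (f ` I)"
  shows "t + (SUP i\<in>I. f i) = (SUP i\<in>I. t + f i)"
proof (rule antisym)
  have bdd: "bdd_above ((\<lambda>i. t + f i) ` I)"
    using assms(2) by (auto simp: bdd_above_def intro: add_left_mono)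
  have "(SUP i\<in>I. f i) \<le> (SUP i\<in>I. t + f i) - t"
    using cSUP_upper[OF _ bdd] by (intro cSUP_least[OF assms(1)]) (simp add: le_diff_eq add.commute)
  then show "t + (SUP i\<in>I. f i) \<le> (SUP i\<in>I. t + f i)"
    by (simp add: le_diff_eq add.commute)
  show "(SUP i\<in>I. t + f i) \<le> t + (SUP i\<in>I. f i)"
    by (rule cSUP_least[OF assms(1)]) (simp add: add_left_mono cSUP_upper assms(2))
qed

lemma bdd_above_inf_image: "bdd_above ((\<lambda>i. inf (x::'a::lattice) (f i)) ` I)"
  by (rule bdd_aboveI[of _ x]) auto

lemma inf_cSUP:
  fixes f :: "'b \<Rightarrow> 'a::{ordered_ab_group_add,conditionally_complete_lattice}"
  assumes "I \<noteq> {}" "bdd_above (f ` I)"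
  shows "inf x (SUP i\<in>I. f i) = (SUP i\<in>I. inf x (f i))"
proof (rule antisym)
  let ?M = "SUP i\<in>I. f i" and ?s = "SUP i\<in>I. inf x (f i)"
  have "?M \<le> ?s + sup x ?M - x"
  proof (rule cSUP_least[OF assms(1)])
    fix i assume i: "i \<in> I"
    have "f i = inf x (f i) + sup x (f i) - x"
      using lattice_add_eq_inf_sup[of x "f i"] by (simp add: algebra_simps)
    also have "\<dots> \<le> ?s + sup x ?M - x"
      using cSUP_upper[OF i bdd_above_inf_image] cSUP_upper[OF i assms(2)]
      by (intro diff_right_mono add_mono) (auto intro: sup.mono le_supI2)
    finally show "f i \<le> ?s + sup x ?M - x" .
  qed
  then have "x + ?M - sup x ?M \<le> ?s"
    by (simp add: algebra_simps)
  moreover have "inf x ?M = x + ?M - sup x ?M"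
    using lattice_add_eq_inf_sup[of x ?M] by (simp add: algebra_simps)
  ultimately show "inf x ?M \<le> ?s"
    by simp
  show "?s \<le> inf x ?M"
    by (rule cSUP_least[OF assms(1)]) (meson le_infI2 cSUP_upper assms(2) inf.mono order_refl)
qed

lemma inf_sup_distrib_group:
  "inf (w::'a::{ordered_ab_group_add,conditionally_complete_lattice}) (sup a b) = sup (inf w a) (inf w b)"
  using inf_cSUP[of "{a, b}" id w] by (simp add: cSup_insert)

lemma cSUP_sup_const:
  fixes f :: "'b \<Rightarrow> 'a::conditionally_complete_lattice"
  assumes "I \<noteq> {}" "bdd_above (f ` I)"
  shows "sup (SUP i\<in>I. f i) c = (SUP i\<in>I. sup (f i) c)"
proof (rule antisym)
  obtain M where M: "\<And>i. i \<in> I \<Longrightarrow> f i \<le> M"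
    using assms(2) by (auto simp: bdd_above_def)
  have bdd: "bdd_above ((\<lambda>i. sup (f i) c) ` I)"
    by (rule bdd_aboveI[of _ "sup M c"]) (auto intro: sup.mono M)
  obtain i0 where i0: "i0 \<in> I"
    using assms(1) by auto
  show "sup (SUP i\<in>I. f i) c \<le> (SUP i\<in>I. sup (f i) c)"
  proof (rule sup_least)
    show "(SUP i\<in>I. f i) \<le> (SUP i\<in>I. sup (f i) c)"
      by (rule cSUP_least[OF assms(1)]) (rule cSUP_upper2[OF bdd], auto)
    show "c \<le> (SUP i\<in>I. sup (f i) c)"
      by (rule cSUP_upper2[OF bdd i0]) auto
  qed
  show "(SUP i\<in>I. sup (f i) c) \<le> sup (SUP i\<in>I. f i) c"
    by (rule cSUP_least[OF assms(1)]) (meson le_supI1 cSUP_upper assms(2) sup.mono order_refl)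
qed

lemma scaleR_sup_pos:
  fixes a b :: "'a::{ordered_real_vector,lattice}"
  assumes "0 < c"
  shows "c *\<^sub>R sup a b = sup (c *\<^sub>R a) (c *\<^sub>R b)"
proof (rule antisym)
  have "sup a b \<le> sup (c *\<^sub>R a) (c *\<^sub>R b) /\<^sub>R c"
    using assms by (simp add: pos_le_divideR_eq)
  then show "c *\<^sub>R sup a b \<le> sup (c *\<^sub>R a) (c *\<^sub>R b)"
    using pos_le_divideR_eq[OF assms] by blast
  show "sup (c *\<^sub>R a) (c *\<^sub>R b) \<le> c *\<^sub>R sup a b"
    using assms by (auto intro!: sup_least scaleR_left_mono)
qed

lemma scaleR_inf_pos:
  fixes a b :: "'a::{ordered_real_vector,lattice}"
  assumes "0 < c"
  shows "c *\<^sub>R inf a b = inf (c *\<^sub>R a) (c *\<^sub>R b)"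
  using scaleR_sup_pos[OF assms, of "- a" "- b"]
  by (simp add: lattice_ab_group_add.inf_eq_neg_sup[OF lattice_ab_group_add_classes(2)])

lemma scaleR_cSUP_pos:
  fixes f :: "'b \<Rightarrow> 'a::{ordered_real_vector,conditionally_complete_lattice}"
  assumes "I \<noteq> {}" "bdd_above (f ` I)" "0 < c"
  shows "c *\<^sub>R (SUP i\<in>I. f i) = (SUP i\<in>I. c *\<^sub>R f i)"
proof (rule antisym)
  obtain M where "\<And>i. i \<in> I \<Longrightarrow> f i \<le> M"
    using assms(2) by (auto simp: bdd_above_def)
  then have bdd: "bdd_above ((\<lambda>i. c *\<^sub>R f i) ` I)"
    using assms(3) by (intro bdd_aboveI[of _ "c *\<^sub>R M"]) (auto intro: scaleR_left_mono)
  have "(SUP i\<in>I. f i) \<le> (SUP i\<in>I. c *\<^sub>R f i) /\<^sub>R c"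
    using cSUP_upper[OF _ bdd] assms(3) by (intro cSUP_least[OF assms(1)]) (simp add: pos_le_divideR_eq)
  then show "c *\<^sub>R (SUP i\<in>I. f i) \<le> (SUP i\<in>I. c *\<^sub>R f i)"
    using pos_le_divideR_eq[OF assms(3)] by blast
  show "(SUP i\<in>I. c *\<^sub>R f i) \<le> c *\<^sub>R (SUP i\<in>I. f i)"
    by (rule cSUP_least[OF assms(1)]) (use assms in \<open>auto intro!: scaleR_left_mono cSUP_upper\<close>)
qed

section \<open>Lower sets closed under suprema\<close>

text \<open>Two upward directed sets are identified in \<open>X\<^sup>s\<close> iff they have the same map
  \<open>sup_meets\<close>; its fixed points form the closed lower set \<open>lower_closure A\<close>, which is the
  canonical representative of the class of \<open>A\<close>.\<close>

definition sup_meets :: "'a::conditionally_complete_lattice set \<Rightarrow> 'a \<Rightarrow> 'a" where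
  "sup_meets A x = (SUP a\<in>A. inf x a)"

definition lower_closure :: "'a::conditionally_complete_lattice set \<Rightarrow> 'a set" where
  "lower_closure A = {w. sup_meets A w = w}"

definition closed_lower :: "'a::conditionally_complete_lattice set \<Rightarrow> bool" where
  "closed_lower T \<longleftrightarrow> T \<noteq> {} \<and> (\<forall>v\<in>T. \<forall>w\<le>v. w \<in> T)
     \<and> (\<forall>S. S \<subseteq> T \<and> S \<noteq> {} \<and> bdd_above S \<longrightarrow> Sup S \<in> T)"

lemma closed_lower_nonempty: "closed_lower T \<Longrightarrow> T \<noteq> {}"
  unfolding closed_lower_def by blast

lemma closed_lower_down: "closed_lower T \<Longrightarrow> v \<in> T \<Longrightarrow> w \<le> v \<Longrightarrow> w \<in> T"
  unfolding closed_lower_def by blast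

lemma closed_lower_Sup: "closed_lower T \<Longrightarrow> S \<subseteq> T \<Longrightarrow> S \<noteq> {} \<Longrightarrow> bdd_above S \<Longrightarrow> Sup S \<in> T"
  unfolding closed_lower_def by blast

lemma closed_lower_SUP:
  "closed_lower T \<Longrightarrow> (\<And>i. i \<in> I \<Longrightarrow> f i \<in> T) \<Longrightarrow> I \<noteq> {} \<Longrightarrow> bdd_above (f ` I)
    \<Longrightarrow> (SUP i\<in>I. f i) \<in> T"
  by (rule closed_lower_Sup) auto

lemma closed_lower_sup: "closed_lower T \<Longrightarrow> a \<in> T \<Longrightarrow> b \<in> T \<Longrightarrow> sup a b \<in> T"
  using closed_lower_Sup[of T "{a, b}"] by (simp add: cSup_insert)

lemma closed_lower_updir: "closed_lower T \<Longrightarrow> updir T"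
  unfolding updir_def using closed_lower_nonempty closed_lower_sup
  by (metis sup.cobounded1 sup.cobounded2)

lemma closed_lower_Int:
  assumes T: "closed_lower T" and U: "closed_lower U"
  shows "closed_lower (T \<inter> U)"
proof -
  obtain a b where "a \<in> T" "b \<in> U"
    using closed_lower_nonempty[OF T] closed_lower_nonempty[OF U] by blast
  then have "inf a b \<in> T \<inter> U"
    using closed_lower_down[OF T] closed_lower_down[OF U] by simp
  moreover have "w \<in> T \<inter> U" if "v \<in> T \<inter> U" "w \<le> v" for v w
    using that closed_lower_down[OF T] closed_lower_down[OF U] by blast
  moreover have "Sup S \<in> T \<inter> U" if "S \<subseteq> T \<inter> U" "S \<noteq> {}" "bdd_above S" for S
    using that closed_lower_Sup[OF T, of S] closed_lower_Sup[OF U, of S] by blast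
  ultimately show ?thesis
    unfolding closed_lower_def by blast
qed

lemma sup_meets_le: "A \<noteq> {} \<Longrightarrow> sup_meets A x \<le> x"
  unfolding sup_meets_def by (rule cSUP_least) simp_all

lemma inf_le_sup_meets: "a \<in> A \<Longrightarrow> inf x a \<le> sup_meets A x"
  unfolding sup_meets_def by (rule cSUP_upper[OF _ bdd_above_inf_image])

lemma sup_meets_mono: "A \<noteq> {} \<Longrightarrow> x \<le> y \<Longrightarrow> sup_meets A x \<le> sup_meets A y"
  unfolding sup_meets_def
  by (rule cSUP_least) (auto intro: cSUP_upper2[OF bdd_above_inf_image] inf.mono)

lemma sup_meets_nonneg: "0 \<in> A \<Longrightarrow> 0 \<le> x \<Longrightarrow> 0 \<le> sup_meets A x"
  using inf_le_sup_meets[of 0 A x] by (simp add: inf.absorb2)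

lemma in_lower_closure: "a \<in> A \<Longrightarrow> a \<in> lower_closure A"
  unfolding lower_closure_def using inf_le_sup_meets[of a A a] sup_meets_le[of A a] by auto

lemma lower_closure_eq: "w \<in> lower_closure A \<Longrightarrow> w = (SUP a\<in>A. inf w a)"
  by (simp add: lower_closure_def sup_meets_def)

context
  fixes A :: "'a::{ordered_ab_group_add,conditionally_complete_lattice} set"
  assumes nonempty: "A \<noteq> {}"
begin

lemma lower_closure_down: "v \<in> lower_closure A \<Longrightarrow> w \<le> v \<Longrightarrow> w \<in> lower_closure A"
proof -
  assume "v \<in> lower_closure A" "w \<le> v"
  then have "w = inf w (SUP a\<in>A. inf v a)"
    using lower_closure_eq by (metis inf.absorb1)
  also have "\<dots> = (SUP a\<in>A. inf w a)"
    using \<open>w \<le> v\<close> by (simp add: inf_cSUP[OF nonempty bdd_above_inf_image] inf.absorb1 flip: inf.assoc)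
  finally show ?thesis
    by (simp add: lower_closure_def sup_meets_def)
qed

lemma closed_lower_lower_closure: "closed_lower (lower_closure A)"
  unfolding closed_lower_def
proof (intro conjI allI impI ballI)
  show "lower_closure A \<noteq> {}"
    using nonempty in_lower_closure by blast
  show "\<And>v w. v \<in> lower_closure A \<Longrightarrow> w \<le> v \<Longrightarrow> w \<in> lower_closure A"
    by (rule lower_closure_down)
  fix S assume S: "S \<subseteq> lower_closure A \<and> S \<noteq> {} \<and> bdd_above S"
  have "Sup S \<le> sup_meets A (Sup S)"
  proof (rule cSup_least)
    fix t assume t: "t \<in> S"
    then have "t = sup_meets A t"
      using S by (auto simp: lower_closure_def)
    also have "\<dots> \<le> sup_meets A (Sup S)"
      using t S by (intro sup_meets_mono nonempty cSup_upper) auto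
    finally show "t \<le> sup_meets A (Sup S)" .
  qed (use S in blast)
  then show "Sup S \<in> lower_closure A"
    using sup_meets_le[OF nonempty, of "Sup S"] by (simp add: lower_closure_def)
qed

lemma lower_closure_least:
  assumes T: "closed_lower T" "A \<subseteq> T"
  shows "lower_closure A \<subseteq> T"
proof
  fix w assume "w \<in> lower_closure A"
  then have "w = (SUP a\<in>A. inf w a)"
    by (rule lower_closure_eq)
  also have "\<dots> \<in> T"
    using T by (intro closed_lower_SUP[OF T(1) _ nonempty bdd_above_inf_image])
      (auto intro: closed_lower_down[OF T(1) _ inf_le2])
  finally show "w \<in> T" .
qed

lemma sup_meets_in_lower_closure: "sup_meets A x \<in> lower_closure A"
  unfolding sup_meets_def
  by (rule closed_lower_SUP[OF closed_lower_lower_closure _ nonempty bdd_above_inf_image])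
    (auto intro: lower_closure_down[OF in_lower_closure inf_le2])

lemma le_sup_meets: "w \<in> lower_closure A \<Longrightarrow> w \<le> x \<Longrightarrow> w \<le> sup_meets A x"
  using sup_meets_mono[OF nonempty, of w x] by (simp add: lower_closure_def)

end

lemma lower_closureI:
  fixes A :: "'a::{ordered_ab_group_add,conditionally_complete_lattice} set"
  shows "a \<in> A \<Longrightarrow> w \<le> a \<Longrightarrow> w \<in> lower_closure A"
  by (rule lower_closure_down[OF _ in_lower_closure]) auto

lemma lower_closure_closed:
  fixes T :: "'a::{ordered_ab_group_add,conditionally_complete_lattice} set"
  shows "closed_lower T \<Longrightarrow> lower_closure T = T"
  using lower_closure_least[OF closed_lower_nonempty] in_lower_closure by blast

lemma lower_closure_subset:
  fixes A B :: "'a::{ordered_ab_group_add,conditionally_complete_lattice} set"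
  shows "A \<noteq> {} \<Longrightarrow> B \<noteq> {} \<Longrightarrow> A \<subseteq> lower_closure B \<Longrightarrow> lower_closure A \<subseteq> lower_closure B"
  by (rule lower_closure_least[OF _ closed_lower_lower_closure])

lemma lower_closure_eqI:
  fixes A B :: "'a::{ordered_ab_group_add,conditionally_complete_lattice} set"
  assumes "A \<noteq> {}" "B \<noteq> {}" "A \<subseteq> lower_closure B" "B \<subseteq> lower_closure A"
  shows "lower_closure A = lower_closure B"
  using lower_closure_subset assms by (metis subset_antisym)

lemma sup_meets_le_iff:
  fixes A B :: "'a::{ordered_ab_group_add,conditionally_complete_lattice} set"
  assumes "A \<noteq> {}" "B \<noteq> {}"
  shows "(\<forall>x. sup_meets A x \<le> sup_meets B x) \<longleftrightarrow> lower_closure A \<subseteq> lower_closure B"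
proof
  assume le: "\<forall>x. sup_meets A x \<le> sup_meets B x"
  show "lower_closure A \<subseteq> lower_closure B"
  proof
    fix w assume "w \<in> lower_closure A"
    then have "w \<le> sup_meets B w"
      using le[rule_format, of w] by (simp add: lower_closure_def)
    then show "w \<in> lower_closure B"
      using sup_meets_le[OF assms(2), of w] by (simp add: lower_closure_def)
  qed
next
  assume sub: "lower_closure A \<subseteq> lower_closure B"
  show "\<forall>x. sup_meets A x \<le> sup_meets B x"
  proof
    fix x
    have "sup_meets A x \<in> lower_closure B"
      using sub sup_meets_in_lower_closure[OF assms(1)] by blast
    then show "sup_meets A x \<le> sup_meets B x"
      using sup_meets_le[OF assms(1)] by (rule le_sup_meets[OF assms(2)])
  qed
qed

lemma sup_meets_eq_iff:
  fixes A B :: "'a::{ordered_ab_group_add,conditionally_complete_lattice} set"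
  assumes "A \<noteq> {}" "B \<noteq> {}"
  shows "sup_meets A = sup_meets B \<longleftrightarrow> lower_closure A = lower_closure B"
proof
  assume "lower_closure A = lower_closure B"
  then have "\<forall>x. sup_meets A x \<le> sup_meets B x" "\<forall>x. sup_meets B x \<le> sup_meets A x"
    using sup_meets_le_iff[OF assms] sup_meets_le_iff[OF assms(2,1)] by auto
  then show "sup_meets A = sup_meets B"
    by (simp add: fun_eq_iff antisym)
qed (simp add: lower_closure_def)

section \<open>Absolute value, ideals and bands\<close>

lemma rabs_ge: "x \<le> rabs x" "- x \<le> rabs x"
  by (simp_all add: rabs_def)

lemma rabs_least: "x \<le> y \<Longrightarrow> - x \<le> y \<Longrightarrow> rabs x \<le> y"
  by (simp add: rabs_def)

lemma rabs_nonneg: "0 \<le> rabs (x::'a::{ordered_real_vector,lattice})"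
proof -
  have "x + - x \<le> rabs x + rabs x"
    by (intro add_mono rabs_ge)
  then have "0 \<le> rabs x + rabs x"
    by simp
  then have "0 \<le> (1/2::real) *\<^sub>R (rabs x + rabs x)"
    by (intro scaleR_nonneg_nonneg) auto
  then show ?thesis
    by (simp flip: scaleR_2)
qed

lemma rabs_of_nonneg: "0 \<le> (x::'a::{ordered_real_vector,lattice}) \<Longrightarrow> rabs x = x"
  unfolding rabs_def by (rule sup_absorb1) (simp add: order_trans[of "- x" 0 x])

lemma rabs_rabs [simp]: "rabs (rabs (x::'a::{ordered_real_vector,lattice})) = rabs x"
  by (rule rabs_of_nonneg[OF rabs_nonneg])

lemma rabs_le_zero: "rabs (x::'a::{ordered_real_vector,lattice}) \<le> 0 \<Longrightarrow> x = 0"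
  using rabs_ge[of x] by (metis antisym neg_le_0_iff_le order_trans)

lemma rabs_add_le: "rabs ((a::'a::{ordered_real_vector,lattice}) + b) \<le> rabs a + rabs b"
  by (rule rabs_least) (use add_mono[OF rabs_ge(1) rabs_ge(1)] add_mono[OF rabs_ge(2) rabs_ge(2)] in simp_all)

lemma rabs_scaleR_le: "rabs (c *\<^sub>R (x::'a::{ordered_real_vector,lattice})) \<le> \<bar>c\<bar> *\<^sub>R rabs x"
proof (cases "0 \<le> c")
  case True
  then show ?thesis
    by (intro rabs_least) (auto intro: scaleR_left_mono rabs_ge simp flip: scaleR_minus_right)
next
  case False
  then have "c *\<^sub>R x = \<bar>c\<bar> *\<^sub>R (- x)" "- (c *\<^sub>R x) = \<bar>c\<bar> *\<^sub>R x"
    by simp_all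
  moreover have "\<bar>c\<bar> *\<^sub>R (- x) \<le> \<bar>c\<bar> *\<^sub>R rabs x" "\<bar>c\<bar> *\<^sub>R x \<le> \<bar>c\<bar> *\<^sub>R rabs x"
    by (intro scaleR_left_mono rabs_ge; simp)+
  ultimately show ?thesis
    by (metis rabs_least)
qed

lemma sup_zero_le_rabs: "sup (a::'a::{ordered_real_vector,lattice}) 0 \<le> rabs a"
  using rabs_ge(1) rabs_nonneg by (rule sup_least)

lemma sup_le_sup_zero_add: "sup (a::'a::{ordered_real_vector,lattice}) b \<le> sup a 0 + sup b 0"
proof (rule sup_least)
  show "a \<le> sup a 0 + sup b 0"
    by (rule order_trans[OF sup_ge1[of a 0]]) (simp add: add_increasing2)
  show "b \<le> sup a 0 + sup b 0"
    by (rule order_trans[OF sup_ge1[of b 0]]) (simp add: add_increasing)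
qed

lemma add_le_two_sup: "(a::'a::{ordered_real_vector,lattice}) + b \<le> (2::real) *\<^sub>R sup a b"
  by (simp add: scaleR_2 add_mono)

lemma disjoint_scaleR_nat:
  fixes r b :: "'a::{ordered_real_vector,lattice}"
  assumes "0 \<le> r" "0 \<le> b" "inf r b = 0"
  shows "inf (real n *\<^sub>R r) b = 0"
proof (induction n)
  case 0
  then show ?case
    using assms(2) by (simp add: inf.absorb1)
next
  case (Suc n)
  have nr: "0 \<le> real n *\<^sub>R r"
    using assms(1) by (simp add: scaleR_nonneg_nonneg)
  have "inf (real (Suc n) *\<^sub>R r) b = inf b (r + real n *\<^sub>R r)"
    by (simp add: inf.commute algebra_simps)
  also have "\<dots> \<le> inf b r + inf b (real n *\<^sub>R r)"
    by (rule inf_add_le_add_inf[OF assms(2,1) nr])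
  also have "\<dots> = 0"
    using Suc assms(3) by (simp add: inf.commute)
  finally show ?case
    using nr assms(1,2) by (metis antisym le_inf_iff scaleR_nonneg_nonneg of_nat_0_le_iff)
qed

lemma ideal_zero: "is_ideal B \<Longrightarrow> 0 \<in> B"
  by (simp add: is_ideal_def)

lemma ideal_add: "is_ideal B \<Longrightarrow> x \<in> B \<Longrightarrow> y \<in> B \<Longrightarrow> x + y \<in> B"
  by (simp add: is_ideal_def)

lemma ideal_scaleR: "is_ideal B \<Longrightarrow> x \<in> B \<Longrightarrow> c *\<^sub>R x \<in> B"
  by (simp add: is_ideal_def)

lemma ideal_solid: "is_ideal B \<Longrightarrow> x \<in> B \<Longrightarrow> rabs y \<le> rabs x \<Longrightarrow> y \<in> B"
  by (simp add: is_ideal_def)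

lemma ideal_rabs:
  fixes x :: "'a::{ordered_real_vector,lattice}"
  shows "is_ideal B \<Longrightarrow> x \<in> B \<Longrightarrow> rabs x \<in> B"
  by (rule ideal_solid[of B x "rabs x"]) simp_all

lemma ideal_nonneg_le:
  fixes x y :: "'a::{ordered_real_vector,lattice}"
  shows "is_ideal B \<Longrightarrow> x \<in> B \<Longrightarrow> 0 \<le> y \<Longrightarrow> y \<le> rabs x \<Longrightarrow> y \<in> B"
  by (rule ideal_solid[of B x y]) (simp_all add: rabs_of_nonneg)

lemma ideal_sup:
  fixes a b :: "'a::{ordered_real_vector,lattice}"
  assumes "is_ideal B" "a \<in> B" "b \<in> B"
  shows "sup a b \<in> B"
proof (rule ideal_solid[OF assms(1)])
  show "rabs a + rabs b \<in> B"
    using assms by (intro ideal_add ideal_rabs)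
  have "rabs (sup a b) \<le> rabs a + rabs b"
  proof (rule rabs_least)
    show "sup a b \<le> rabs a + rabs b"
      using rabs_ge(1)[of a] rabs_ge(1)[of b] rabs_nonneg[of a] rabs_nonneg[of b]
      by (intro sup_least) (auto intro: add_increasing add_increasing2)
    have "- sup a b \<le> - a"
      by simp
    also have "\<dots> \<le> rabs a + rabs b"
      using rabs_nonneg[of b] rabs_ge(2)[of a] by (rule add_increasing2)
    finally show "- sup a b \<le> rabs a + rabs b" .
  qed
  then show "rabs (sup a b) \<le> rabs (rabs a + rabs b)"
    using rabs_nonneg[of a] rabs_nonneg[of b] by (simp add: rabs_of_nonneg)
qed

lemma ideal_updir:
  fixes B :: "'a::{ordered_real_vector,lattice} set"
  assumes "is_ideal B"
  shows "updir B"
  unfolding updir_def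
proof (intro conjI ballI)
  show "B \<noteq> {}"
    using ideal_zero[OF assms] by blast
  fix a b assume "a \<in> B" "b \<in> B"
  then show "\<exists>c\<in>B. a \<le> c \<and> b \<le> c"
    by (intro bexI[of _ "sup a b"] ideal_sup[OF assms]) auto
qed

lemma band_ideal: "is_band B \<Longrightarrow> is_ideal B"
  by (simp add: is_band_def)

lemma band_Sup: "is_band B \<Longrightarrow> D \<subseteq> B \<Longrightarrow> D \<noteq> {} \<Longrightarrow> bdd_above D \<Longrightarrow> Sup D \<in> B"
  by (simp add: is_band_def)

lemma band_nonempty: "is_band B \<Longrightarrow> B \<noteq> {}"
  using ideal_zero band_ideal by blast

lemma band_lower_closure_iff:
  fixes B :: "'a::{ordered_real_vector,conditionally_complete_lattice} set"
  assumes B: "is_band B"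
  shows "w \<in> lower_closure B \<longleftrightarrow> sup w 0 \<in> B"
proof
  assume "w \<in> lower_closure B"
  then have "sup w 0 = sup (SUP b\<in>B. inf w b) 0"
    by (simp flip: lower_closure_eq)
  also have "\<dots> = (SUP b\<in>B. sup (inf w b) 0)"
    by (rule cSUP_sup_const[OF band_nonempty[OF B] bdd_above_inf_image])
  also have "\<dots> \<in> B"
  proof (rule band_Sup[OF B])
    show "(\<lambda>b. sup (inf w b) 0) ` B \<subseteq> B"
    proof
      fix y assume "y \<in> (\<lambda>b. sup (inf w b) 0) ` B"
      then obtain b where b: "b \<in> B" "y = sup (inf w b) 0"
        by blast
      have "y \<le> sup b 0"
        using b by (simp add: le_supI1)
      also have "\<dots> \<le> rabs b"
        by (rule sup_zero_le_rabs)
      finally show "y \<in> B"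
        using b by (intro ideal_nonneg_le[OF band_ideal[OF B] b(1)]) auto
    qed
    show "(\<lambda>b. sup (inf w b) 0) ` B \<noteq> {}"
      using band_nonempty[OF B] by blast
    show "bdd_above ((\<lambda>b. sup (inf w b) 0) ` B)"
      by (rule bdd_aboveI[of _ "sup w 0"]) (auto intro: sup.mono)
  qed
  finally show "sup w 0 \<in> B" .
next
  assume "sup w 0 \<in> B"
  then show "w \<in> lower_closure B"
    by (rule lower_closureI) simp
qed

lemma band_lower_closure_scaleR:
  fixes B :: "'a::{ordered_real_vector,conditionally_complete_lattice} set"
  assumes B: "is_band B" and c: "0 < c"
  shows "(\<lambda>w. c *\<^sub>R w) ` lower_closure B = lower_closure B"
proof -
  have scaled: "d *\<^sub>R w \<in> lower_closure B" if "w \<in> lower_closure B" "0 < d" for w d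
  proof -
    have "d *\<^sub>R sup w 0 \<in> B"
      using that by (intro ideal_scaleR[OF band_ideal[OF B]]) (simp add: band_lower_closure_iff[OF B])
    then show ?thesis
      using scaleR_sup_pos[OF that(2), of w 0] by (simp add: band_lower_closure_iff[OF B])
  qed
  show ?thesis
  proof (intro set_eqI iffI)
    fix w assume "w \<in> (\<lambda>w. c *\<^sub>R w) ` lower_closure B"
    then show "w \<in> lower_closure B"
      using scaled c by blast
  next
    fix w assume "w \<in> lower_closure B"
    then have "(1/c) *\<^sub>R w \<in> lower_closure B"
      using scaled c by simp
    moreover have "w = c *\<^sub>R ((1/c) *\<^sub>R w)"
      using c by simp
    ultimately show "w \<in> (\<lambda>w. c *\<^sub>R w) ` lower_closure B"
      by blast
  qed
qed

lemma band_projection: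
  fixes B :: "'a::{ordered_real_vector,conditionally_complete_lattice} set"
  assumes "is_band B" "0 \<le> x"
  obtains P where "P \<in> B" "0 \<le> P" "P \<le> x" "\<And>b. b \<in> B \<Longrightarrow> inf (x - P) (rabs b) = 0"
proof -
  note ideal = band_ideal[OF assms(1)]
  let ?D = "{b \<in> B. 0 \<le> b \<and> b \<le> x}"
  let ?P = "Sup ?D"
  have D0: "0 \<in> ?D"
    using ideal_zero[OF ideal] assms(2) by simp
  have bdd: "bdd_above ?D"
    by (rule bdd_aboveI[of _ x]) auto
  have PB: "?P \<in> B"
    using band_Sup[OF assms(1), of ?D] D0 bdd by blast
  have P0: "0 \<le> ?P"
    using cSup_upper[OF D0 bdd] .
  have Px: "?P \<le> x"
    using D0 by (intro cSup_least) auto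
  have "inf (x - ?P) (rabs b) = 0" if b: "b \<in> B" for b
  proof -
    let ?c = "inf (x - ?P) (rabs b)"
    have c0: "0 \<le> ?c"
      using Px rabs_nonneg[of b] by simp
    then have cB: "?c \<in> B"
      by (rule ideal_nonneg_le[OF ideal b _ inf_le2])
    have "?P + ?c \<le> x"
      using inf_le1[of "x - ?P" "rabs b"] by (simp add: le_diff_eq add.commute)
    then have "?P + ?c \<in> ?D"
      using ideal_add[OF ideal PB cB] P0 c0 by simp
    then have "?P + ?c \<le> ?P"
      using cSup_upper[OF _ bdd] by blast
    then show ?thesis
      using c0 by simp
  qed
  then show ?thesis
    using PB P0 Px that by blast
qed

section \<open>The sup-completion represented by closed lower sets\<close>

text \<open>\<open>below p\<close> is the set of elements of \<open>X\<close> below \<open>p\<close> (see \<open>emb_le_iff\<close>); it determines \<open>p\<close>,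
  and the order of \<open>X\<^sup>s\<close> is inclusion of these sets.\<close>

definition below :: "'a::conditionally_complete_lattice set set \<Rightarrow> 'a set" where
  "below p = lower_closure (sc_rep p)"

lemma updir_nonempty: "updir A \<Longrightarrow> A \<noteq> {}"
  by (simp add: updir_def)

lemma updir_image_mono:
  assumes "mono f" "updir A"
  shows "updir (f ` A)"
  unfolding updir_def
proof (intro conjI ballI)
  show "f ` A \<noteq> {}"
    using assms(2) by (simp add: updir_def)
  fix x y assume "x \<in> f ` A" "y \<in> f ` A"
  then obtain a b where "a \<in> A" "b \<in> A" "x = f a" "y = f b"
    by blast
  moreover obtain c where "c \<in> A" "a \<le> c" "b \<le> c"
    using assms(2) \<open>a \<in> A\<close> \<open>b \<in> A\<close> unfolding updir_def by blast
  ultimately show "\<exists>z\<in>f ` A. x \<le> z \<and> y \<le> z"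
    using assms(1) by (auto dest: monoD)
qed

lemma updir_image_mono2:
  assumes mono: "\<And>a a' b b'. a \<le> a' \<Longrightarrow> b \<le> b' \<Longrightarrow> f a b \<le> f a' b'"
    and A: "updir A" and B: "updir B"
  shows "updir {f a b | a b. a \<in> A \<and> b \<in> B}"
  unfolding updir_def
proof (intro conjI ballI)
  show "{f a b | a b. a \<in> A \<and> b \<in> B} \<noteq> {}"
    using A B by (auto simp: updir_def)
  fix x y assume "x \<in> {f a b | a b. a \<in> A \<and> b \<in> B}" "y \<in> {f a b | a b. a \<in> A \<and> b \<in> B}"
  then obtain a b a' b' where x: "x = f a b" "a \<in> A" "b \<in> B" and y: "y = f a' b'" "a' \<in> A" "b' \<in> B"
    by blast
  obtain c d where "c \<in> A" "a \<le> c" "a' \<le> c" "d \<in> B" "b \<le> d" "b' \<le> d"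
    using A B x(2,3) y(2,3) unfolding updir_def by meson
  then have "f c d \<in> {f a b | a b. a \<in> A \<and> b \<in> B}" "x \<le> f c d" "y \<le> f c d"
    using x y mono by blast+
  then show "\<exists>e\<in>{f a b | a b. a \<in> A \<and> b \<in> B}. x \<le> e \<and> y \<le> e"
    by blast
qed

lemma set_plus_eq: "A + B = {a + b | a b. a \<in> A \<and> b \<in> B}"
  unfolding set_plus_def by blast

lemma sc_rel_iff: "sc_rel A B \<longleftrightarrow> sup_meets A = sup_meets B"
  by (simp add: sc_rel_def sup_meets_def fun_eq_iff)

lemma sc_class_self: "updir A \<Longrightarrow> A \<in> sc_class A"
  by (simp add: sc_class_def sc_rel_iff)

lemma sc_class_in_Xs: "updir A \<Longrightarrow> sc_class A \<in> Xs"
  by (auto simp: Xs_def)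

lemma sc_rep_sc_class:
  assumes "updir A"
  shows "updir (sc_rep (sc_class A))" "sup_meets (sc_rep (sc_class A)) = sup_meets A"
proof -
  have "sc_rep (sc_class A) \<in> sc_class A"
    unfolding sc_rep_def by (rule someI[of _ A]) (rule sc_class_self[OF assms])
  then show "updir (sc_rep (sc_class A))" "sup_meets (sc_rep (sc_class A)) = sup_meets A"
    by (auto simp: sc_class_def sc_rel_iff)
qed

context
  fixes A :: "'a::{ordered_ab_group_add,conditionally_complete_lattice} set"
  assumes A: "updir A"
begin

lemma below_sc_class: "below (sc_class A) = lower_closure A"
  using sc_rep_sc_class[OF A] by (simp add: below_def lower_closure_def)

lemma sc_class_eq_iff:
  assumes B: "updir B"
  shows "sc_class A = sc_class B \<longleftrightarrow> lower_closure A = lower_closure B"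
proof -
  have "sc_class A = sc_class B \<longleftrightarrow> sup_meets A = sup_meets B"
    using sc_class_self[OF B] by (auto simp: sc_class_def sc_rel_iff)
  also have "\<dots> \<longleftrightarrow> lower_closure A = lower_closure B"
    by (rule sup_meets_eq_iff[OF updir_nonempty[OF A] updir_nonempty[OF B]])
  finally show ?thesis .
qed

end

context
  fixes p :: "'a::{ordered_ab_group_add,conditionally_complete_lattice} set set"
  assumes p: "p \<in> Xs"
begin

lemma sc_rep_updir: "updir (sc_rep p)"
  using p sc_rep_sc_class(1) by (auto simp: Xs_def)

lemma closed_lower_below: "closed_lower (below p)"
  unfolding below_def by (rule closed_lower_lower_closure[OF updir_nonempty[OF sc_rep_updir]])

lemma sc_class_below: "sc_class (below p) = p"
proof -
  obtain A where A: "updir A" "p = sc_class A"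
    using p by (auto simp: Xs_def)
  have "lower_closure (below p) = lower_closure A"
    using lower_closure_closed[OF closed_lower_below] below_sc_class[OF A(1)] A(2) by simp
  then show ?thesis
    using sc_class_eq_iff[OF closed_lower_updir[OF closed_lower_below] A(1)] A(2) by blast
qed

end

lemma Xs_eqI:
  fixes p q :: "'a::{ordered_ab_group_add,conditionally_complete_lattice} set set"
  shows "p \<in> Xs \<Longrightarrow> q \<in> Xs \<Longrightarrow> below p = below q \<Longrightarrow> p = q"
  by (metis sc_class_below)

lemma below_sc_class_closed:
  fixes T :: "'a::{ordered_ab_group_add,conditionally_complete_lattice} set"
  assumes "closed_lower T"
  shows "below (sc_class T) = T" "sc_class T \<in> Xs"
  using below_sc_class[OF closed_lower_updir[OF assms]] lower_closure_closed[OF assms]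
    sc_class_in_Xs[OF closed_lower_updir[OF assms]]
  by simp_all

lemma sc_le_iff:
  fixes p q :: "'a::{ordered_ab_group_add,conditionally_complete_lattice} set set"
  assumes p: "p \<in> Xs" and q: "q \<in> Xs"
  shows "sc_le p q \<longleftrightarrow> below p \<subseteq> below q"
proof
  assume "sc_le p q"
  then obtain A B where AB: "updir A" "updir B" "p = sc_class A" "q = sc_class B"
      "\<forall>x. sup_meets A x \<le> sup_meets B x"
    by (auto simp: sc_le_def sup_meets_def)
  then show "below p \<subseteq> below q"
    using sup_meets_le_iff[OF updir_nonempty[OF AB(1)] updir_nonempty[OF AB(2)]]
    by (simp add: below_sc_class)
next
  assume "below p \<subseteq> below q"
  then have "\<forall>x. sup_meets (below p) x \<le> sup_meets (below q) x"
    using closed_lower_below[OF p] closed_lower_below[OF q]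
    by (simp add: sup_meets_le_iff closed_lower_nonempty lower_closure_closed)
  moreover have "p = sc_class (below p)" "q = sc_class (below q)"
    using sc_class_below[OF p] sc_class_below[OF q] by simp_all
  ultimately show "sc_le p q"
    unfolding sc_le_def sup_meets_def using closed_lower_updir[OF closed_lower_below] p q by blast
qed

lemma lower_closure_singleton: "lower_closure {w} = {v. v \<le> w}"
  by (auto simp: lower_closure_def sup_meets_def inf.absorb_iff1)

lemma below_emb:
  fixes w :: "'a::{ordered_ab_group_add,conditionally_complete_lattice}"
  shows "below (emb w) = {v. v \<le> w}" "emb w \<in> Xs"
proof -
  have "updir {w}"
    by (simp add: updir_def)
  then show "below (emb w) = {v. v \<le> w}" "emb w \<in> Xs"
    by (simp_all add: emb_def below_sc_class lower_closure_singleton sc_class_in_Xs)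
qed

lemma emb_le_iff:
  fixes p :: "'a::{ordered_ab_group_add,conditionally_complete_lattice} set set"
  assumes "p \<in> Xs"
  shows "sc_le (emb w) p \<longleftrightarrow> w \<in> below p"
  using sc_le_iff[OF below_emb(2) assms] below_emb(1) closed_lower_down[OF closed_lower_below[OF assms]]
  by auto

lemma Xs_pos_iff:
  fixes p :: "'a::{ordered_real_vector,conditionally_complete_lattice} set set"
  shows "p \<in> Xs_pos \<longleftrightarrow> p \<in> Xs \<and> 0 \<in> below p"
  using emb_le_iff by (auto simp: Xs_pos_def sc_zero_def)

lemma sc_le_antisym:
  fixes p q :: "'a::{ordered_ab_group_add,conditionally_complete_lattice} set set"
  shows "p \<in> Xs \<Longrightarrow> q \<in> Xs \<Longrightarrow> sc_le p q \<Longrightarrow> sc_le q p \<Longrightarrow> p = q"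
  by (simp add: sc_le_iff Xs_eqI)

lemma sc_Sup_eqI:
  fixes z :: "'a::{ordered_ab_group_add,conditionally_complete_lattice} set set"
  assumes "z \<in> Xs" "\<And>s. s \<in> S \<Longrightarrow> sc_le s z"
    and "\<And>w. w \<in> Xs \<Longrightarrow> (\<And>s. s \<in> S \<Longrightarrow> sc_le s w) \<Longrightarrow> sc_le z w"
  shows "sc_Sup S = z"
  unfolding sc_Sup_def
proof (rule the_equality)
  fix z' assume z': "z' \<in> Xs \<and> (\<forall>s\<in>S. sc_le s z') \<and> (\<forall>w\<in>Xs. (\<forall>s\<in>S. sc_le s w) \<longrightarrow> sc_le z' w)"
  then have "sc_le z' z" "sc_le z z'"
    using assms by simp_all
  then show "z' = z"
    using z' assms(1) by (simp add: sc_le_antisym)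
qed (use assms in blast)

lemma sc_Inf_eqI:
  fixes z :: "'a::{ordered_ab_group_add,conditionally_complete_lattice} set set"
  assumes "z \<in> Xs" "\<And>s. s \<in> S \<Longrightarrow> sc_le z s"
    and "\<And>w. w \<in> Xs \<Longrightarrow> (\<And>s. s \<in> S \<Longrightarrow> sc_le w s) \<Longrightarrow> sc_le w z"
  shows "sc_Inf S = z"
  unfolding sc_Inf_def
proof (rule the_equality)
  fix z' assume z': "z' \<in> Xs \<and> (\<forall>s\<in>S. sc_le z' s) \<and> (\<forall>w\<in>Xs. (\<forall>s\<in>S. sc_le w s) \<longrightarrow> sc_le w z')"
  then have "sc_le z' z" "sc_le z z'"
    using assms by simp_all
  then show "z' = z"
    using z' assms(1) by (simp add: sc_le_antisym)
qed (use assms in blast)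

lemma below_sc_inf:
  fixes p q :: "'a::{ordered_ab_group_add,conditionally_complete_lattice} set set"
  assumes p: "p \<in> Xs" and q: "q \<in> Xs"
  shows "sc_inf p q \<in> Xs" "below (sc_inf p q) = below p \<inter> below q"
proof -
  let ?T = "below p \<inter> below q"
  note T = below_sc_class_closed[OF closed_lower_Int[OF closed_lower_below[OF p] closed_lower_below[OF q]]]
  have "sc_inf p q = sc_class ?T"
    unfolding sc_inf_def
  proof (rule sc_Inf_eqI[OF T(2)])
    show "\<And>s. s \<in> {p, q} \<Longrightarrow> sc_le (sc_class ?T) s"
      using sc_le_iff[OF T(2) p] sc_le_iff[OF T(2) q] T(1) by auto
    fix w assume w: "w \<in> Xs" "\<And>s. s \<in> {p, q} \<Longrightarrow> sc_le w s"
    then show "sc_le w (sc_class ?T)"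
      using w(2)[of p] w(2)[of q] sc_le_iff[OF w(1) p] sc_le_iff[OF w(1) q] sc_le_iff[OF w(1) T(2)] T(1)
      by simp
  qed
  then show "sc_inf p q \<in> Xs" "below (sc_inf p q) = ?T"
    using T by simp_all
qed

definition sup_set :: "'a::lattice set \<Rightarrow> 'a set \<Rightarrow> 'a set" where
  "sup_set A B = {sup a b | a b. a \<in> A \<and> b \<in> B}"

lemma sup_setI: "a \<in> A \<Longrightarrow> b \<in> B \<Longrightarrow> sup a b \<in> sup_set A B"
  unfolding sup_set_def by blast

lemma sup_setE: "s \<in> sup_set A B \<Longrightarrow> (\<And>a b. s = sup a b \<Longrightarrow> a \<in> A \<Longrightarrow> b \<in> B \<Longrightarrow> P) \<Longrightarrow> P"
  unfolding sup_set_def by blast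

lemma sup_set_nonempty: "A \<noteq> {} \<Longrightarrow> B \<noteq> {} \<Longrightarrow> sup_set A B \<noteq> {}"
  using sup_setI by blast

lemma updir_sup_set: "updir A \<Longrightarrow> updir B \<Longrightarrow> updir (sup_set A B)"
  unfolding sup_set_def by (rule updir_image_mono2[OF sup_mono])

lemma sup_set_commute: "sup_set A B = sup_set B A"
  unfolding sup_set_def using sup_commute by blast

lemma subset_lower_closure_sup_set:
  fixes A B :: "'a::{ordered_ab_group_add,conditionally_complete_lattice} set"
  assumes "B \<noteq> {}"
  shows "A \<subseteq> lower_closure (sup_set A B)"
proof
  fix a assume "a \<in> A"
  moreover obtain b where "b \<in> B"
    using assms by blast
  ultimately show "a \<in> lower_closure (sup_set A B)"
    by (intro lower_closureI[of "sup a b"] sup_setI) simp_all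
qed

lemma below_sc_sup:
  fixes p q :: "'a::{ordered_ab_group_add,conditionally_complete_lattice} set set"
  assumes p: "p \<in> Xs" and q: "q \<in> Xs"
  shows "sc_sup p q \<in> Xs" "below (sc_sup p q) = lower_closure (sup_set (below p) (below q))"
    and "below p \<subseteq> below (sc_sup p q)" "below q \<subseteq> below (sc_sup p q)"
proof -
  let ?S = "sup_set (below p) (below q)"
  note Cp = closed_lower_below[OF p] and Cq = closed_lower_below[OF q]
  note S = updir_sup_set[OF closed_lower_updir[OF Cp] closed_lower_updir[OF Cq]]
  note ne = updir_nonempty[OF S]
  have below_S: "below (sc_class ?S) = lower_closure ?S"
    by (rule below_sc_class[OF S])
  have up_p: "below p \<subseteq> lower_closure ?S" and up_q: "below q \<subseteq> lower_closure ?S"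
    using subset_lower_closure_sup_set[OF closed_lower_nonempty[OF Cq], of "below p"]
      subset_lower_closure_sup_set[OF closed_lower_nonempty[OF Cp], of "below q"]
    by (simp_all add: sup_set_commute)
  have "sc_sup p q = sc_class ?S"
    unfolding sc_sup_def
  proof (rule sc_Sup_eqI[OF sc_class_in_Xs[OF S]])
    show "\<And>s. s \<in> {p, q} \<Longrightarrow> sc_le s (sc_class ?S)"
      using p q up_p up_q by (auto simp: sc_le_iff[OF _ sc_class_in_Xs[OF S]] below_S)
  next
    fix w assume w: "w \<in> Xs" "\<And>s. s \<in> {p, q} \<Longrightarrow> sc_le s w"
    then have "below p \<subseteq> below w" "below q \<subseteq> below w"
      using w(2)[of p] w(2)[of q] sc_le_iff[OF p w(1)] sc_le_iff[OF q w(1)] by simp_all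
    then have "?S \<subseteq> below w"
      using closed_lower_sup[OF closed_lower_below[OF w(1)]] unfolding sup_set_def by blast
    then show "sc_le (sc_class ?S) w"
      using lower_closure_least[OF ne closed_lower_below[OF w(1)]]
      by (simp add: sc_le_iff[OF sc_class_in_Xs[OF S] w(1)] below_S)
  qed
  then show "sc_sup p q \<in> Xs" "below (sc_sup p q) = lower_closure ?S"
      "below p \<subseteq> below (sc_sup p q)" "below q \<subseteq> below (sc_sup p q)"
    using sc_class_in_Xs[OF S] below_S up_p up_q by simp_all
qed

lemma updir_set_plus:
  fixes A B :: "'a::ordered_ab_semigroup_add set"
  shows "updir A \<Longrightarrow> updir B \<Longrightarrow> updir (A + B)"
  unfolding set_plus_eq by (rule updir_image_mono2[OF add_mono])

lemma add_in_lower_closure_set_plus: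
  fixes A B :: "'a::{ordered_ab_group_add,conditionally_complete_lattice} set"
  assumes A: "A \<noteq> {}" and B: "B \<noteq> {}" and w: "w \<in> lower_closure A" "v \<in> lower_closure B"
  shows "w + v \<in> lower_closure (A + B)"
proof -
  have ne: "A + B \<noteq> {}"
    using A B by (auto simp: set_plus_def)
  note closed = closed_lower_lower_closure[OF ne]
  have inner: "inf v b + w \<in> lower_closure (A + B)" if b: "b \<in> B" for b
  proof -
    have "inf v b + w = (SUP a\<in>A. inf v b + inf w a)"
      by (subst lower_closure_eq[OF w(1)]) (rule add_cSUP[OF A bdd_above_inf_image])
    also have "\<dots> \<in> lower_closure (A + B)"
    proof (rule closed_lower_SUP[OF closed _ A])
      fix a assume "a \<in> A"
      then show "inf v b + inf w a \<in> lower_closure (A + B)"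
        using b add_mono[OF inf_le2[of v b] inf_le2[of w a]]
        by (intro lower_closureI[of "a + b"] set_plus_intro) (simp_all add: add.commute)
    next
      show "bdd_above ((\<lambda>a. inf v b + inf w a) ` A)"
        by (rule bdd_aboveI[of _ "inf v b + w"]) (auto intro: add_left_mono)
    qed
    finally show ?thesis .
  qed
  have "w + v = (SUP b\<in>B. w + inf v b)"
    by (subst lower_closure_eq[OF w(2)]) (rule add_cSUP[OF B bdd_above_inf_image])
  also have "\<dots> \<in> lower_closure (A + B)"
  proof (rule closed_lower_SUP[OF closed _ B])
    show "\<And>b. b \<in> B \<Longrightarrow> w + inf v b \<in> lower_closure (A + B)"
      using inner by (simp add: add.commute)
    show "bdd_above ((\<lambda>b. w + inf v b) ` B)"
      by (rule bdd_aboveI[of _ "w + v"]) (auto intro: add_left_mono)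
  qed
  finally show ?thesis .
qed

lemma below_sc_add:
  fixes p q :: "'a::{ordered_real_vector,conditionally_complete_lattice} set set"
  assumes p: "p \<in> Xs" and q: "q \<in> Xs"
  shows "sc_add p q \<in> Xs" "below (sc_add p q) = lower_closure (below p + below q)"
proof -
  let ?R = "sc_rep p" and ?S = "sc_rep q"
  have U: "updir (?R + ?S)"
    by (rule updir_set_plus[OF sc_rep_updir[OF p] sc_rep_updir[OF q]])
  have eq: "sc_add p q = sc_class (?R + ?S)"
    by (simp add: sc_add_def set_plus_eq)
  show "sc_add p q \<in> Xs"
    using eq sc_class_in_Xs[OF U] by simp
  have ne: "?R \<noteq> {}" "?S \<noteq> {}" "?R + ?S \<noteq> {}" "below p + below q \<noteq> {}"
    using updir_nonempty[OF sc_rep_updir[OF p]] updir_nonempty[OF sc_rep_updir[OF q]] updir_nonempty[OF U]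
      closed_lower_nonempty[OF closed_lower_below[OF p]] closed_lower_nonempty[OF closed_lower_below[OF q]]
    by (auto simp: set_plus_def)
  have "lower_closure (?R + ?S) = lower_closure (below p + below q)"
  proof (rule lower_closure_eqI[OF ne(3,4)])
    show "?R + ?S \<subseteq> lower_closure (below p + below q)"
      by (auto simp: below_def intro!: in_lower_closure elim!: set_plus_elim)
    show "below p + below q \<subseteq> lower_closure (?R + ?S)"
      using add_in_lower_closure_set_plus[OF ne(1,2)] by (auto simp: below_def elim!: set_plus_elim)
  qed
  then show "below (sc_add p q) = lower_closure (below p + below q)"
    using eq below_sc_class[OF U] by simp
qed

lemma below_sc_scale:
  fixes p :: "'a::{ordered_real_vector,conditionally_complete_lattice} set set"
  assumes p: "p \<in> Xs" and c: "0 < c"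
  shows "sc_scale c p \<in> Xs" "below (sc_scale c p) = (\<lambda>w. c *\<^sub>R w) ` below p"
proof -
  let ?R = "sc_rep p"
  let ?cR = "(\<lambda>a. c *\<^sub>R a) ` ?R"
  have ne: "?R \<noteq> {}"
    using updir_nonempty[OF sc_rep_updir[OF p]] .
  have U: "updir ?cR"
    using c by (intro updir_image_mono sc_rep_updir[OF p]) (simp add: mono_def scaleR_left_mono)
  show "sc_scale c p \<in> Xs"
    using sc_class_in_Xs[OF U] by (simp add: sc_scale_def)
  have scaled: "sup_meets ?cR x = c *\<^sub>R sup_meets ?R (x /\<^sub>R c)" for x
  proof -
    have "sup_meets ?cR x = (SUP a\<in>?R. c *\<^sub>R inf (x /\<^sub>R c) a)"
      using c by (simp add: sup_meets_def image_image scaleR_inf_pos)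
    also have "\<dots> = c *\<^sub>R sup_meets ?R (x /\<^sub>R c)"
      unfolding sup_meets_def by (rule scaleR_cSUP_pos[OF ne bdd_above_inf_image c, symmetric])
    finally show ?thesis .
  qed
  have scale_eq: "c *\<^sub>R y = w \<longleftrightarrow> y = w /\<^sub>R c" for y w :: 'a
    using c by auto
  have mem_iff: "w \<in> lower_closure ?cR \<longleftrightarrow> w /\<^sub>R c \<in> lower_closure ?R" for w
    by (simp add: lower_closure_def scaled scale_eq)
  have "lower_closure ?cR = (\<lambda>w. c *\<^sub>R w) ` lower_closure ?R"
  proof (intro set_eqI iffI)
    fix w assume "w \<in> lower_closure ?cR"
    then have "w /\<^sub>R c \<in> lower_closure ?R"
      by (simp add: mem_iff)
    moreover have "w = c *\<^sub>R (w /\<^sub>R c)"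
      using c by simp
    ultimately show "w \<in> (\<lambda>w. c *\<^sub>R w) ` lower_closure ?R"
      by blast
  next
    fix w assume "w \<in> (\<lambda>w. c *\<^sub>R w) ` lower_closure ?R"
    then show "w \<in> lower_closure ?cR"
      using c by (auto simp: mem_iff)
  qed
  then show "below (sc_scale c p) = (\<lambda>w. c *\<^sub>R w) ` below p"
    using below_sc_class[OF U] by (simp add: sc_scale_def below_def)
qed

lemma sc_scale_zero:
  fixes p :: "'a::{ordered_real_vector,conditionally_complete_lattice} set set"
  assumes "p \<in> Xs"
  shows "sc_scale 0 p = emb 0"
proof -
  have "(\<lambda>a. (0::real) *\<^sub>R a) ` sc_rep p = {0}"
    using updir_nonempty[OF sc_rep_updir[OF assms]] by auto
  then show ?thesis
    by (simp add: sc_scale_def emb_def)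
qed

lemma below_infty:
  fixes B :: "'a::{ordered_real_vector,conditionally_complete_lattice} set"
  assumes "is_ideal B"
  shows "infty B \<in> Xs" "below (infty B) = lower_closure B"
proof -
  note U = ideal_updir[OF assms]
  note Z = sc_class_in_Xs[OF U] and I = below_sc_class[OF U]
  have "infty B = sc_class B"
    unfolding infty_def
  proof (rule sc_Sup_eqI[OF Z])
    show "\<And>s. s \<in> emb ` B \<Longrightarrow> sc_le s (sc_class B)"
      using emb_le_iff[OF Z] I in_lower_closure by auto
    fix w assume w: "w \<in> Xs" "\<And>s. s \<in> emb ` B \<Longrightarrow> sc_le s w"
    then have "B \<subseteq> below w"
      using emb_le_iff[OF w(1)] by auto
    then have "lower_closure B \<subseteq> below w"
      by (rule lower_closure_least[OF updir_nonempty[OF U] closed_lower_below[OF w(1)]])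
    then show "sc_le (sc_class B) w"
      using sc_le_iff[OF Z w(1)] I by simp
  qed
  then show "infty B \<in> Xs" "below (infty B) = lower_closure B"
    using Z I by simp_all
qed

section \<open>The band of infinite elements of a closed lower set\<close>

definition infinite_band :: "'a::{ordered_real_vector,lattice} set \<Rightarrow> 'a set" where
  "infinite_band J = {z. \<forall>n::nat. real n *\<^sub>R rabs z \<in> J}"

lemma infinite_band_scaleR_rabs:
  fixes J :: "'a::{ordered_real_vector,conditionally_complete_lattice} set"
  assumes "closed_lower J" "z \<in> infinite_band J"
  shows "r *\<^sub>R rabs z \<in> J"
proof -
  obtain n :: nat where "r \<le> real n"
    using real_arch_simple by blast
  then have "r *\<^sub>R rabs z \<le> real n *\<^sub>R rabs z"
    using rabs_nonneg by (rule scaleR_right_mono)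
  moreover have "real n *\<^sub>R rabs z \<in> J"
    using assms(2) by (simp add: infinite_band_def)
  ultimately show ?thesis
    using closed_lower_down[OF assms(1)] by blast
qed

lemma infinite_bandI: "(\<And>r. 0 \<le> r \<Longrightarrow> r *\<^sub>R rabs z \<in> J) \<Longrightarrow> z \<in> infinite_band J"
  by (simp add: infinite_band_def)

lemma infinite_band_subset:
  fixes J :: "'a::{ordered_real_vector,conditionally_complete_lattice} set"
  assumes "closed_lower J"
  shows "infinite_band J \<subseteq> J"
proof
  fix z assume "z \<in> infinite_band J"
  then have "rabs z \<in> J"
    using infinite_band_scaleR_rabs[OF assms, of z 1] by simp
  then show "z \<in> J"
    using closed_lower_down[OF assms] rabs_ge(1) by blast
qed

lemma infinite_band_mono: "J \<subseteq> K \<Longrightarrow> infinite_band J \<subseteq> infinite_band K"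
  by (auto simp: infinite_band_def)

lemma infinite_band_Int: "infinite_band (J \<inter> K) = infinite_band J \<inter> infinite_band K"
  by (auto simp: infinite_band_def)

lemma is_ideal_infinite_band:
  fixes J :: "'a::{ordered_real_vector,conditionally_complete_lattice} set"
  assumes J: "closed_lower J" "0 \<in> J"
  shows "is_ideal (infinite_band J)"
proof -
  have solid: "y \<in> infinite_band J" if "x \<in> infinite_band J" "rabs y \<le> rabs x" for x y
  proof (rule infinite_bandI)
    fix r :: real assume "0 \<le> r"
    then have "r *\<^sub>R rabs y \<le> r *\<^sub>R rabs x"
      using that(2) by (rule scaleR_left_mono[rotated])
    then show "r *\<^sub>R rabs y \<in> J"
      using closed_lower_down[OF J(1) infinite_band_scaleR_rabs[OF J(1) that(1)]] by blast
  qed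
  have add: "x + y \<in> infinite_band J" if x: "x \<in> infinite_band J" and y: "y \<in> infinite_band J" for x y
  proof (rule infinite_bandI)
    fix r :: real assume r: "0 \<le> r"
    let ?u = "(2 * r) *\<^sub>R rabs x" and ?v = "(2 * r) *\<^sub>R rabs y"
    have "r *\<^sub>R rabs (x + y) \<le> r *\<^sub>R (rabs x + rabs y)"
      using r rabs_add_le by (rule scaleR_left_mono[rotated])
    also have "\<dots> = (1/2::real) *\<^sub>R ?u + (1/2::real) *\<^sub>R ?v"
      by (simp add: scaleR_add_right)
    also have "\<dots> \<le> (1/2::real) *\<^sub>R sup ?u ?v + (1/2::real) *\<^sub>R sup ?u ?v"
      by (intro add_mono scaleR_left_mono) auto
    also have "\<dots> = sup ?u ?v"
      by (simp flip: scaleR_add_left)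
    finally show "r *\<^sub>R rabs (x + y) \<in> J"
      using closed_lower_down[OF J(1) closed_lower_sup[OF J(1)]]
        infinite_band_scaleR_rabs[OF J(1) x] infinite_band_scaleR_rabs[OF J(1) y] by blast
  qed
  have "0 \<in> infinite_band J"
    using J(2) by (simp add: infinite_band_def rabs_of_nonneg)
  moreover have "c *\<^sub>R x \<in> infinite_band J" if "x \<in> infinite_band J" for c x
  proof (rule infinite_bandI)
    fix r :: real assume "0 \<le> r"
    then have "r *\<^sub>R rabs (c *\<^sub>R x) \<le> r *\<^sub>R (\<bar>c\<bar> *\<^sub>R rabs x)"
      using rabs_scaleR_le by (rule scaleR_left_mono[rotated])
    then have "r *\<^sub>R rabs (c *\<^sub>R x) \<le> (r * \<bar>c\<bar>) *\<^sub>R rabs x"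
      by simp
    then show "r *\<^sub>R rabs (c *\<^sub>R x) \<in> J"
      using closed_lower_down[OF J(1) infinite_band_scaleR_rabs[OF J(1) that]] by blast
  qed
  ultimately show ?thesis
    unfolding is_ideal_def using add solid by blast
qed

lemma Sup_in_infinite_band:
  fixes J :: "'a::{ordered_real_vector,conditionally_complete_lattice} set"
  assumes J: "closed_lower J" "0 \<in> J"
    and D: "D \<subseteq> infinite_band J" "D \<noteq> {}" "bdd_above D"
  shows "Sup D \<in> infinite_band J"
proof (rule infinite_bandI)
  fix r :: real assume r: "0 \<le> r"
  obtain d0 where d0: "d0 \<in> D"
    using D(2) by blast
  have in_J: "r *\<^sub>R d \<in> J" if "d \<le> rabs e" "e \<in> D" for d e
    using closed_lower_down[OF J(1) infinite_band_scaleR_rabs[OF J(1)]] that D(1) r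
    by (meson scaleR_left_mono subsetD)
  have pos: "r *\<^sub>R Sup D \<in> J"
  proof (cases "r = 0")
    case True
    then show ?thesis using J(2) by simp
  next
    case False
    obtain M where M: "\<And>d. d \<in> D \<Longrightarrow> d \<le> M"
      using D(3) by (auto simp: bdd_above_def)
    have "r *\<^sub>R Sup D = (SUP d\<in>D. r *\<^sub>R d)"
      using scaleR_cSUP_pos[OF D(2) _, of id r] D(3) False r by simp
    also have "\<dots> \<in> J"
      using r M in_J[OF rabs_ge(1)]
      by (intro closed_lower_SUP[OF J(1) _ D(2)] bdd_aboveI[of _ "r *\<^sub>R M"]) (auto intro: scaleR_left_mono)
    finally show ?thesis .
  qed
  have "- Sup D \<le> - d0"
    using cSup_upper[OF d0 D(3)] by simp
  also have "\<dots> \<le> rabs d0"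
    by (rule rabs_ge(2))
  finally have neg: "r *\<^sub>R (- Sup D) \<in> J"
    using in_J d0 by blast
  have "r *\<^sub>R rabs (Sup D) \<le> sup (r *\<^sub>R Sup D) (r *\<^sub>R (- Sup D))"
    using r by (cases "r = 0") (simp_all add: rabs_def scaleR_sup_pos)
  then show "r *\<^sub>R rabs (Sup D) \<in> J"
    using closed_lower_down[OF J(1) closed_lower_sup[OF J(1) pos neg]] by blast
qed

lemma is_band_infinite_band:
  fixes J :: "'a::{ordered_real_vector,conditionally_complete_lattice} set"
  shows "closed_lower J \<Longrightarrow> 0 \<in> J \<Longrightarrow> is_band (infinite_band J)"
  unfolding is_band_def using is_ideal_infinite_band Sup_in_infinite_band by blast

lemma infinite_band_scaleR:
  fixes J :: "'a::{ordered_real_vector,conditionally_complete_lattice} set"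
  assumes J: "closed_lower J" and c: "0 < c"
  shows "infinite_band ((\<lambda>w. c *\<^sub>R w) ` J) = infinite_band J"
proof (intro set_eqI iffI)
  fix z assume z: "z \<in> infinite_band ((\<lambda>w. c *\<^sub>R w) ` J)"
  show "z \<in> infinite_band J"
  proof (rule infinite_bandI)
    fix r :: real assume "0 \<le> r"
    obtain n :: nat where n: "r * c \<le> real n"
      using real_arch_simple by blast
    have "real n *\<^sub>R rabs z \<in> (\<lambda>w. c *\<^sub>R w) ` J"
      using z by (simp add: infinite_band_def)
    then obtain v where v: "v \<in> J" "real n *\<^sub>R rabs z = c *\<^sub>R v"
      by blast
    then have "c *\<^sub>R v = c *\<^sub>R ((real n / c) *\<^sub>R rabs z)"
      using c by simp
    then have "v = (real n / c) *\<^sub>R rabs z"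
      by (rule scaleR_left_imp_eq[rotated]) (use c in simp)
    moreover have "r \<le> real n / c"
      using n c by (simp add: pos_le_divide_eq)
    ultimately have "r *\<^sub>R rabs z \<le> v"
      using scaleR_right_mono[OF _ rabs_nonneg] by simp
    then show "r *\<^sub>R rabs z \<in> J"
      using closed_lower_down[OF J v(1)] by blast
  qed
next
  fix z assume z: "z \<in> infinite_band J"
  show "z \<in> infinite_band ((\<lambda>w. c *\<^sub>R w) ` J)"
  proof (rule infinite_bandI)
    fix r :: real
    have "r *\<^sub>R rabs z = c *\<^sub>R ((r / c) *\<^sub>R rabs z)"
      using c by simp
    then show "r *\<^sub>R rabs z \<in> (\<lambda>w. c *\<^sub>R w) ` J"
      using infinite_band_scaleR_rabs[OF J z] by blast
  qed
qed

section \<open>Decomposition into infinite and finite part\<close>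

lemma Xu_pos_iff:
  fixes u :: "'a::{ordered_real_vector,conditionally_complete_lattice} set set"
  shows "u \<in> Xu_pos \<longleftrightarrow>
    u \<in> Xs \<and> 0 \<in> below u \<and> (\<forall>z. 0 \<le> z \<and> (\<forall>n::nat. real n *\<^sub>R z \<in> below u) \<longrightarrow> z = 0)"
  unfolding Xu_pos_def Xs_pos_iff using emb_le_iff by blast

lemma below_sc_add_infty:
  fixes u :: "'a::{ordered_real_vector,conditionally_complete_lattice} set set"
  assumes "is_band B" "u \<in> Xs"
  shows "sc_add (infty B) u \<in> Xs"
    "below (sc_add (infty B) u) = lower_closure (lower_closure B + below u)"
  using below_sc_add[OF below_infty(1)[OF band_ideal[OF assms(1)]] assms(2)]
    below_infty(2)[OF band_ideal[OF assms(1)]]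
  by simp_all

lemma lower_closure_band_plus_nonempty:
  fixes B K :: "'a::{ordered_real_vector,conditionally_complete_lattice} set"
  assumes "is_band B" "K \<noteq> {}"
  shows "lower_closure B + K \<noteq> {}"
proof -
  obtain b k where "b \<in> B" "k \<in> K"
    using assms band_nonempty by blast
  then have "b + k \<in> lower_closure B + K"
    by (intro set_plus_intro in_lower_closure)
  then show ?thesis
    by blast
qed

lemma disjoint_in_summand:
  fixes w :: "'a::{ordered_real_vector,conditionally_complete_lattice}"
  assumes B: "is_band B" and K: "closed_lower K" "0 \<in> K" and w0: "0 \<le> w"
    and disjoint: "\<And>b. b \<in> B \<Longrightarrow> inf w (rabs b) = 0"
    and w: "w \<in> lower_closure (lower_closure B + K)"
  shows "w \<in> K"
proof -
  let ?S = "lower_closure B + K"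
  have "w = (SUP s\<in>?S. inf w s)"
    using w by (rule lower_closure_eq)
  also have "\<dots> \<in> K"
  proof (rule closed_lower_SUP[OF K(1) _ _ bdd_above_inf_image])
    show "?S \<noteq> {}"
      using lower_closure_band_plus_nonempty[OF B] K(2) by blast
    fix s assume "s \<in> ?S"
    then obtain a c where s: "s = a + c" "a \<in> lower_closure B" "c \<in> K"
      by (auto elim: set_plus_elim)
    have "sup a 0 \<in> B"
      using s(2) band_lower_closure_iff[OF B] by blast
    then have wa: "inf w (sup a 0) = 0"
      using disjoint[of "sup a 0"] by (simp add: rabs_of_nonneg)
    have "s \<le> sup a 0 + sup c 0"
      using s(1) by (simp add: add_mono)
    then have "inf w s \<le> inf w (sup a 0 + sup c 0)"
      by (simp add: le_infI2)
    also have "\<dots> \<le> inf w (sup a 0) + inf w (sup c 0)"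
      by (rule inf_add_le_add_inf[OF w0]) simp_all
    also have "\<dots> \<le> sup c 0"
      using wa by simp
    finally show "inf w s \<in> K"
      using closed_lower_down[OF K(1) closed_lower_sup[OF K(1) s(3) K(2)]] by blast
  qed
  finally show ?thesis .
qed

lemma band_subset_infinite_band_below_sc_add_infty:
  fixes u :: "'a::{ordered_real_vector,conditionally_complete_lattice} set set"
  assumes B: "is_band B" and u: "u \<in> Xs" "0 \<in> below u"
  shows "B \<subseteq> infinite_band (below (sc_add (infty B) u))"
proof
  fix z assume z: "z \<in> B"
  note ideal = band_ideal[OF B]
  show "z \<in> infinite_band (below (sc_add (infty B) u))"
    unfolding infinite_band_def
  proof (intro CollectI allI)
    fix n :: nat
    have sum: "real n *\<^sub>R rabs z + 0 \<in> lower_closure B + below u"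
      using z u(2) by (intro set_plus_intro in_lower_closure ideal_scaleR[OF ideal] ideal_rabs[OF ideal])
    show "real n *\<^sub>R rabs z \<in> below (sc_add (infty B) u)"
      using in_lower_closure[OF sum] below_sc_add_infty(2)[OF B u(1)] by simp
  qed
qed

text \<open>Uniqueness of the decomposition: the band \<open>B\<close> of \<open>\<infinity>\<^sub>B + u\<close> is recovered from the
  element alone, as its band of infinite elements.\<close>

lemma infinite_band_below_sc_add_infty:
  fixes u :: "'a::{ordered_real_vector,conditionally_complete_lattice} set set"
  assumes B: "is_band B" and u: "u \<in> Xu_pos"
  shows "infinite_band (below (sc_add (infty B) u)) = B"
proof
  have uX: "u \<in> Xs" and u0: "0 \<in> below u"
    and finite: "\<And>z. 0 \<le> z \<Longrightarrow> (\<And>n::nat. real n *\<^sub>R z \<in> below u) \<Longrightarrow> z = 0"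
    using u Xu_pos_iff by blast+
  note J = below_sc_add_infty[OF B uX]
  show "B \<subseteq> infinite_band (below (sc_add (infty B) u))"
    by (rule band_subset_infinite_band_below_sc_add_infty[OF B uX u0])
  show "infinite_band (below (sc_add (infty B) u)) \<subseteq> B"
  proof
    fix z assume z: "z \<in> infinite_band (below (sc_add (infty B) u))"
    obtain P where P: "P \<in> B" "0 \<le> P" "P \<le> rabs z" "\<And>b. b \<in> B \<Longrightarrow> inf (rabs z - P) (rabs b) = 0"
      using band_projection[OF B rabs_nonneg] by blast
    have "rabs z - P = 0"
    proof (rule finite)
      show "0 \<le> rabs z - P"
        using P by simp
      fix n :: nat
      have n0: "0 \<le> real n *\<^sub>R (rabs z - P)"
        using P by (simp add: scaleR_nonneg_nonneg)
      have "real n *\<^sub>R (rabs z - P) \<le> real n *\<^sub>R rabs z"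
        using P by (simp add: scaleR_left_mono)
      moreover have "real n *\<^sub>R rabs z \<in> below (sc_add (infty B) u)"
        using z by (simp add: infinite_band_def)
      ultimately have "real n *\<^sub>R (rabs z - P) \<in> lower_closure (lower_closure B + below u)"
        using closed_lower_down[OF closed_lower_below[OF J(1)]] J(2) by auto
      moreover have "inf (real n *\<^sub>R (rabs z - P)) (rabs b) = 0" if "b \<in> B" for b
        using disjoint_scaleR_nat[OF _ rabs_nonneg P(4)[OF that]] P(3) by simp
      ultimately show "real n *\<^sub>R (rabs z - P) \<in> below u"
        by (rule disjoint_in_summand[OF B closed_lower_below[OF uX] u0 n0, rotated])
    qed
    then have "rabs z \<in> B"
      using P(1) by simp
    then show "z \<in> B"
      by (rule ideal_solid[OF band_ideal[OF B]]) simp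
  qed
qed

definition disjoint_part :: "'a::{ordered_real_vector,lattice} set \<Rightarrow> 'a set \<Rightarrow> 'a set" where
  "disjoint_part J B = {v \<in> J. 0 \<le> v \<and> (\<forall>b\<in>B. inf v (rabs b) = 0)}"

lemma zero_in_disjoint_part: "0 \<in> J \<Longrightarrow> 0 \<in> disjoint_part J B"
  by (simp add: disjoint_part_def rabs_nonneg inf.absorb1)

lemma updir_disjoint_part:
  fixes J :: "'a::{ordered_real_vector,conditionally_complete_lattice} set"
  assumes J: "closed_lower J" "0 \<in> J"
  shows "updir (disjoint_part J B)"
proof -
  have sup_mem: "sup v1 v2 \<in> disjoint_part J B"
    if "v1 \<in> disjoint_part J B" "v2 \<in> disjoint_part J B" for v1 v2
  proof -
    have v: "v1 \<in> J" "v2 \<in> J" "0 \<le> v1" "0 \<le> v2"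
      "\<And>b. b \<in> B \<Longrightarrow> inf v1 (rabs b) = 0" "\<And>b. b \<in> B \<Longrightarrow> inf v2 (rabs b) = 0"
      using that by (auto simp: disjoint_part_def)
    have "inf (sup v1 v2) (rabs b) = 0" if b: "b \<in> B" for b
    proof (rule antisym)
      have "sup v1 v2 \<le> v1 + v2"
        using v(3,4) by (auto intro: add_increasing add_increasing2)
      then have "inf (rabs b) (sup v1 v2) \<le> inf (rabs b) (v1 + v2)"
        by (rule inf_mono[OF order_refl])
      then have "inf (sup v1 v2) (rabs b) \<le> inf (rabs b) (v1 + v2)"
        by (simp add: inf_commute)
      also have "\<dots> \<le> inf (rabs b) v1 + inf (rabs b) v2"
        using v(3,4) rabs_nonneg by (intro inf_add_le_add_inf)
      also have "\<dots> = 0"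
        using v(5,6) b by (simp add: inf.commute)
      finally show "inf (sup v1 v2) (rabs b) \<le> 0" .
      show "0 \<le> inf (sup v1 v2) (rabs b)"
        using v(3) rabs_nonneg[of b] by (simp add: le_supI1)
    qed
    then show ?thesis
      using v closed_lower_sup[OF J(1) v(1,2)] by (auto simp: disjoint_part_def le_supI1)
  qed
  show ?thesis
    unfolding updir_def
  proof (intro conjI ballI)
    show "disjoint_part J B \<noteq> {}"
      using zero_in_disjoint_part[OF J(2)] by blast
    fix v1 v2 assume "v1 \<in> disjoint_part J B" "v2 \<in> disjoint_part J B"
    then show "\<exists>c\<in>disjoint_part J B. v1 \<le> c \<and> v2 \<le> c"
      by (intro bexI[of _ "sup v1 v2"] sup_mem) auto
  qed
qed

lemma disjoint_lower_closure_disjoint_part: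
  fixes J :: "'a::{ordered_real_vector,conditionally_complete_lattice} set"
  assumes "0 \<in> J" and z: "z \<in> lower_closure (disjoint_part J B)" "0 \<le> z" and b: "b \<in> B"
  shows "inf z (rabs b) = 0"
proof -
  let ?U = "disjoint_part J B"
  have ne: "?U \<noteq> {}"
    using zero_in_disjoint_part[OF assms(1)] by blast
  have "inf (rabs b) z = inf (rabs b) (SUP v\<in>?U. inf z v)"
    using lower_closure_eq[OF z(1)] by simp
  also have "\<dots> = (SUP v\<in>?U. inf (rabs b) (inf z v))"
    by (rule inf_cSUP[OF ne bdd_above_inf_image])
  also have "\<dots> = (SUP v\<in>?U. inf z 0)"
  proof (rule SUP_cong[OF refl])
    fix v assume "v \<in> ?U"
    then have "inf v (rabs b) = 0"
      using b by (simp add: disjoint_part_def)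
    then show "inf (rabs b) (inf z v) = inf z 0"
      by (metis inf.assoc inf.commute)
  qed
  also have "\<dots> = 0"
    using ne z(2) by (simp add: inf.absorb2)
  finally show ?thesis
    by (simp add: inf.commute)
qed

lemma add_lower_closure_disjoint_part:
  fixes J :: "'a::{ordered_real_vector,conditionally_complete_lattice} set"
  assumes J: "closed_lower J" "0 \<in> J" and B: "B \<subseteq> J"
    and a: "a \<in> B" "0 \<le> a" and c: "c \<in> lower_closure (disjoint_part J B)"
  shows "a + c \<in> J"
proof -
  let ?U = "disjoint_part J B"
  have neU: "?U \<noteq> {}"
    using zero_in_disjoint_part[OF J(2)] by blast
  have "a + c = a + (SUP v\<in>?U. inf c v)"
    using lower_closure_eq[OF c] by simp
  also have "\<dots> = (SUP v\<in>?U. a + inf c v)"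
    by (rule add_cSUP[OF neU bdd_above_inf_image])
  also have "\<dots> \<in> J"
  proof (rule closed_lower_SUP[OF J(1) _ neU])
    fix v assume v: "v \<in> ?U"
    then have "inf v (rabs a) = 0"
      using a(1) by (simp add: disjoint_part_def)
    then have "inf a v = 0"
      using a(2) by (simp add: rabs_of_nonneg inf.commute)
    then have "a + v = sup a v"
      by (rule disjoint_add_eq_sup)
    moreover have "sup a v \<in> J"
      using closed_lower_sup[OF J(1)] a(1) B v by (auto simp: disjoint_part_def)
    moreover have "a + inf c v \<le> a + v"
      by (simp add: add_left_mono)
    ultimately show "a + inf c v \<in> J"
      using closed_lower_down[OF J(1)] by metis
  next
    show "bdd_above ((\<lambda>v. a + inf c v) ` ?U)"
      by (rule bdd_aboveI[of _ "a + c"]) (auto intro: add_left_mono)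
  qed
  finally show ?thesis .
qed

text \<open>Existence of the decomposition at the level of \<open>X\<close>: every element of \<open>J\<close> is dominated by
  its projection onto \<open>B\<close> plus a positive remainder disjoint from \<open>B\<close>.\<close>

lemma lower_closure_band_plus_disjoint_part:
  fixes J :: "'a::{ordered_real_vector,conditionally_complete_lattice} set"
  assumes J: "closed_lower J" "0 \<in> J" and B: "is_band B" "B \<subseteq> J"
  shows "lower_closure (lower_closure B + lower_closure (disjoint_part J B)) = J"
proof -
  let ?U = "disjoint_part J B"
  let ?S = "lower_closure B + lower_closure ?U"
  have "0 \<in> lower_closure ?U"
    by (rule in_lower_closure[OF zero_in_disjoint_part[OF J(2)]])
  then have neS: "?S \<noteq> {}"
    using lower_closure_band_plus_nonempty[OF B(1)] by blast
  have "?S \<subseteq> J"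
  proof
    fix s assume "s \<in> ?S"
    then obtain a c where s: "s = a + c" "a \<in> lower_closure B" "c \<in> lower_closure ?U"
      by (auto elim: set_plus_elim)
    have "sup a 0 \<in> B"
      using s(2) band_lower_closure_iff[OF B(1)] by blast
    then have "sup a 0 + c \<in> J"
      using add_lower_closure_disjoint_part[OF J B(2) _ sup_ge2 s(3)] by blast
    moreover have "s \<le> sup a 0 + c"
      using s(1) by (simp add: add_right_mono)
    ultimately show "s \<in> J"
      using closed_lower_down[OF J(1)] by blast
  qed
  then have "lower_closure ?S \<subseteq> J"
    by (rule lower_closure_least[OF neS J(1)])
  moreover have "J \<subseteq> lower_closure ?S"
  proof
    fix w assume w: "w \<in> J"
    let ?x = "sup w 0"
    obtain P where P: "P \<in> B" "0 \<le> P" "P \<le> ?x" "\<And>b. b \<in> B \<Longrightarrow> inf (?x - P) (rabs b) = 0"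
      using band_projection[OF B(1), of ?x] by auto
    have "?x - P \<in> J"
      using closed_lower_down[OF J(1) closed_lower_sup[OF J(1) w J(2)], of "?x - P"] P(2) by simp
    then have "?x - P \<in> ?U"
      using P(3,4) by (simp add: disjoint_part_def)
    then have "P + (?x - P) \<in> ?S"
      using P(1) by (intro set_plus_intro in_lower_closure)
    then show "w \<in> lower_closure ?S"
      by (rule lower_closureI) simp
  qed
  ultimately show ?thesis
    by (rule antisym)
qed

lemma Xu_pos_sc_class_disjoint_part:
  fixes J :: "'a::{ordered_real_vector,conditionally_complete_lattice} set"
  assumes J: "closed_lower J" "0 \<in> J"
  shows "sc_class (disjoint_part J (infinite_band J)) \<in> Xu_pos"
proof -
  let ?U = "disjoint_part J (infinite_band J)"
  note U = updir_disjoint_part[OF J]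
  have below_U: "below (sc_class ?U) = lower_closure ?U"
    by (rule below_sc_class[OF U])
  have UJ: "lower_closure ?U \<subseteq> J"
    by (rule lower_closure_least[OF updir_nonempty[OF U] J(1)]) (auto simp: disjoint_part_def)
  show ?thesis
    unfolding Xu_pos_iff below_U
  proof (intro conjI allI impI sc_class_in_Xs[OF U])
    show "0 \<in> lower_closure ?U"
      by (rule in_lower_closure[OF zero_in_disjoint_part[OF J(2)]])
    fix z assume z: "0 \<le> z \<and> (\<forall>n::nat. real n *\<^sub>R z \<in> lower_closure ?U)"
    then have "z \<in> infinite_band J"
      using UJ by (auto simp: infinite_band_def rabs_of_nonneg)
    moreover have "z \<in> lower_closure ?U"
      using z by (metis of_nat_1 scaleR_one)
    ultimately have "inf z (rabs z) = 0"
      using disjoint_lower_closure_disjoint_part[OF J(2)] z by blast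
    then show "z = 0"
      using z by (simp add: rabs_of_nonneg)
  qed
qed

lemma sc_disj_band_sc_class_disjoint_part:
  fixes J :: "'a::{ordered_real_vector,conditionally_complete_lattice} set"
  assumes J: "closed_lower J" "0 \<in> J"
  shows "sc_disj_band (sc_class (disjoint_part J B)) B"
  unfolding sc_disj_band_def
proof
  fix b assume b: "b \<in> B"
  let ?U = "disjoint_part J B"
  note U = updir_disjoint_part[OF J]
  note uX = sc_class_in_Xs[OF U]
  have "below (sc_inf (sc_class ?U) (emb (rabs b))) = lower_closure ?U \<inter> {v. v \<le> rabs b}"
    using below_sc_inf(2)[OF uX below_emb(2)] below_sc_class[OF U] below_emb(1)[of "rabs b"] by simp
  also have "\<dots> = {v. v \<le> 0}"
  proof (intro set_eqI iffI)
    fix w assume w: "w \<in> lower_closure ?U \<inter> {v. v \<le> rabs b}"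
    then have "sup w 0 \<in> lower_closure ?U"
      using closed_lower_sup[OF closed_lower_lower_closure[OF updir_nonempty[OF U]]]
        in_lower_closure[OF zero_in_disjoint_part[OF J(2)]] by blast
    then have "inf (sup w 0) (rabs b) = 0"
      using disjoint_lower_closure_disjoint_part[OF J(2) _ _ b] by simp
    moreover have "sup w 0 \<le> rabs b"
      using w rabs_nonneg[of b] by simp
    ultimately have "sup w 0 = 0"
      by (simp add: inf_absorb1)
    then show "w \<in> {v. v \<le> 0}"
      using sup_ge1[of w 0] by simp
  next
    fix w :: 'a assume "w \<in> {v. v \<le> 0}"
    then show "w \<in> lower_closure ?U \<inter> {v. v \<le> rabs b}"
      using lower_closureI[OF zero_in_disjoint_part[OF J(2)]] rabs_nonneg[of b] order_trans by auto
  qed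
  also have "\<dots> = below (emb 0)"
    using below_emb(1)[of "0::'a"] by simp
  finally show "sc_inf (sc_class ?U) (emb (rabs b)) = sc_zero"
    unfolding sc_zero_def by (rule Xs_eqI[OF below_sc_inf(1)[OF uX below_emb(2)] below_emb(2)])
qed

lemma decomposition_exists:
  fixes p :: "'a::{ordered_real_vector,conditionally_complete_lattice} set set"
  assumes p: "p \<in> Xs_pos"
  defines "B \<equiv> infinite_band (below p)"
  obtains u where "u \<in> Xu_pos" "sc_disj_band u B" "p = sc_add (infty B) u"
proof
  have pX: "p \<in> Xs" and J: "closed_lower (below p)" "0 \<in> below p"
    using p Xs_pos_iff closed_lower_below by blast+
  let ?U = "disjoint_part (below p) B"
  note U = updir_disjoint_part[OF J]
  have band: "is_band B"
    unfolding B_def by (rule is_band_infinite_band[OF J])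
  show "sc_class ?U \<in> Xu_pos"
    unfolding B_def by (rule Xu_pos_sc_class_disjoint_part[OF J])
  show "sc_disj_band (sc_class ?U) B"
    by (rule sc_disj_band_sc_class_disjoint_part[OF J])
  have "below (sc_add (infty B) (sc_class ?U)) = below p"
    using below_sc_add_infty(2)[OF band sc_class_in_Xs[OF U]] below_sc_class[OF U]
      lower_closure_band_plus_disjoint_part[OF J band] infinite_band_subset[OF J(1)]
    by (simp add: B_def)
  then show "p = sc_add (infty B) (sc_class ?U)"
    using Xs_eqI[OF pX below_sc_add_infty(1)[OF band sc_class_in_Xs[OF U]]] by simp
qed

lemma inf_part_eq:
  fixes p :: "'a::{ordered_real_vector,conditionally_complete_lattice} set set"
  assumes p: "p \<in> Xs_pos"
  shows "inf_part p = infty (infinite_band (below p))"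
  unfolding inf_part_def
proof (rule the_equality)
  have "is_band (infinite_band (below p))"
    using p Xs_pos_iff closed_lower_below is_band_infinite_band by blast
  then show "\<exists>B u. is_band B \<and> u \<in> Xu_pos \<and> sc_disj_band u B \<and> p = sc_add (infty B) u \<and>
      infty (infinite_band (below p)) = infty B"
    using decomposition_exists[OF p] by metis
next
  fix c assume "\<exists>B u. is_band B \<and> u \<in> Xu_pos \<and> sc_disj_band u B \<and> p = sc_add (infty B) u \<and> c = infty B"
  then show "c = infty (infinite_band (below p))"
    using infinite_band_below_sc_add_infty by metis
qed

section \<open>An Archimedean argument\<close>

text \<open>The infimum of the averages has all its multiples in \<open>K\<close>.\<close>

lemma sup_meets_averages:
  fixes r :: "'a::{ordered_real_vector,conditionally_complete_lattice}"
  assumes K: "closed_lower K" "0 \<in> K"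
    and finite: "\<And>z. 0 \<le> z \<Longrightarrow> (\<And>n::nat. real n *\<^sub>R z \<in> K) \<Longrightarrow> z = 0"
    and r: "0 \<le> r"
    and a_def: "a = (\<lambda>n::nat. (1 / real (Suc n)) *\<^sub>R sup_meets K (real (Suc n) *\<^sub>R r))"
  shows "0 \<le> a n" "decseq a" "Inf (range a) = 0"
proof -
  have neK: "K \<noteq> {}"
    using K(2) by blast
  have in_K: "sup_meets K x \<in> K" for x
    using sup_meets_in_lower_closure[OF neK] lower_closure_closed[OF K(1)] by simp
  show a0: "0 \<le> a n" for n
    unfolding a_def using r sup_meets_nonneg[OF K(2)] by (simp add: scaleR_nonneg_nonneg)
  have "a (Suc n) \<le> a n" for n
  proof -
    let ?m = "real (Suc n)" and ?m' = "real (Suc (Suc n))"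
    let ?f = "sup_meets K (?m' *\<^sub>R r)"
    have f0: "0 \<le> ?f"
      using r sup_meets_nonneg[OF K(2)] by (simp add: scaleR_nonneg_nonneg)
    have "(?m / ?m') *\<^sub>R ?f \<le> ?f"
      using f0 by (intro scaleR_left_le_one_le) auto
    then have "(?m / ?m') *\<^sub>R ?f \<in> lower_closure K"
      using closed_lower_down[OF K(1) in_K] lower_closure_closed[OF K(1)] by simp
    moreover have "(?m / ?m') *\<^sub>R ?f \<le> (?m / ?m') *\<^sub>R (?m' *\<^sub>R r)"
      using sup_meets_le[OF neK, of "?m' *\<^sub>R r"] by (intro scaleR_left_mono) auto
    moreover have "(?m / ?m') *\<^sub>R (?m' *\<^sub>R r) = ?m *\<^sub>R r"
      by simp
    ultimately have "(?m / ?m') *\<^sub>R ?f \<le> sup_meets K (?m *\<^sub>R r)"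
      using le_sup_meets[OF neK] by metis
    then have "(1 / ?m) *\<^sub>R ((?m / ?m') *\<^sub>R ?f) \<le> (1 / ?m) *\<^sub>R sup_meets K (?m *\<^sub>R r)"
      by (intro scaleR_left_mono) auto
    then show ?thesis
      unfolding a_def by simp
  qed
  then show "decseq a"
    by (rule decseq_SucI)
  have bdd: "bdd_below (range a)"
    by (rule bdd_belowI[of _ 0]) (auto intro: a0)
  have "real k *\<^sub>R Inf (range a) \<in> K" for k :: nat
  proof (cases k)
    case 0
    then show ?thesis using K(2) by simp
  next
    case (Suc j)
    have "real k *\<^sub>R Inf (range a) \<le> real k *\<^sub>R a j"
      by (intro scaleR_left_mono cINF_lower[OF bdd]) auto
    also have "\<dots> = sup_meets K (real k *\<^sub>R r)"
      using Suc by (simp add: a_def)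
    finally show ?thesis
      using closed_lower_down[OF K(1) in_K] by blast
  qed
  moreover have "0 \<le> Inf (range a)"
    by (rule cINF_greatest) (auto intro: a0)
  ultimately show "Inf (range a) = 0"
    using finite by blast
qed

lemma archimedean_sup_meets:
  fixes r :: "'a::{ordered_real_vector,conditionally_complete_lattice}"
  assumes K: "closed_lower K" "0 \<in> K" "\<And>z. 0 \<le> z \<Longrightarrow> (\<And>n::nat. real n *\<^sub>R z \<in> K) \<Longrightarrow> z = 0"
    and L: "closed_lower L" "0 \<in> L" "\<And>z. 0 \<le> z \<Longrightarrow> (\<And>n::nat. real n *\<^sub>R z \<in> L) \<Longrightarrow> z = 0"
    and r: "0 \<le> r"
    and le: "\<And>n::nat. real n *\<^sub>R r \<le> sup (sup_meets K (real n *\<^sub>R r)) (sup_meets L (real n *\<^sub>R r))"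
  shows "r = 0"
proof -
  define a where "a = (\<lambda>n::nat. (1 / real (Suc n)) *\<^sub>R sup_meets K (real (Suc n) *\<^sub>R r))"
  define b where "b = (\<lambda>n::nat. (1 / real (Suc n)) *\<^sub>R sup_meets L (real (Suc n) *\<^sub>R r))"
  note A = sup_meets_averages[OF K r a_def]
  note B = sup_meets_averages[OF L r b_def]
  have rab: "r \<le> a n + b n" for n
  proof -
    let ?m = "real (Suc n)"
    have "(1 / ?m) *\<^sub>R (?m *\<^sub>R r) \<le> (1 / ?m) *\<^sub>R sup (sup_meets K (?m *\<^sub>R r)) (sup_meets L (?m *\<^sub>R r))"
      using le[of "Suc n"] by (intro scaleR_left_mono) auto
    also have "\<dots> = sup (a n) (b n)"
      unfolding a_def b_def by (rule scaleR_sup_pos) simp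
    also have "\<dots> \<le> a n + b n"
      using A(1) B(1) by (auto intro: sup_least add_increasing add_increasing2)
    finally show ?thesis
      by simp
  qed
  have rij: "r \<le> a i + b j" for i j
  proof -
    have "a (max i j) + b (max i j) \<le> a i + b j"
      using A(2) B(2) by (intro add_mono) (auto simp: decseq_def)
    then show ?thesis
      using rab[of "max i j"] by simp
  qed
  have bdd: "bdd_below (range a)"
    by (rule bdd_belowI[of _ 0]) (auto intro: A(1))
  have "r - b j \<le> Inf (range a)" for j
    by (rule cINF_greatest) (use rij in \<open>auto simp: diff_le_eq\<close>)
  then have "r \<le> Inf (range b)"
    using A(3) by (intro cINF_greatest) auto
  then show ?thesis
    using B(3) r by simp
qed

lemma inf_le_sup_meets_summand:
  fixes w :: "'a::{ordered_real_vector,conditionally_complete_lattice}"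
  assumes B: "is_band B" and K: "closed_lower K" "0 \<in> K"
    and w0: "0 \<le> w" and disjoint: "\<And>b. b \<in> B \<Longrightarrow> inf w (rabs b) = 0"
    and a: "a \<in> lower_closure (lower_closure B + K)"
  shows "inf w a \<le> sup_meets K w"
proof -
  let ?J = "lower_closure (lower_closure B + K)"
  have ne: "lower_closure B + K \<noteq> {}"
    using lower_closure_band_plus_nonempty[OF B] K(2) by blast
  then have neJ: "?J \<noteq> {}"
    using closed_lower_nonempty[OF closed_lower_lower_closure] by blast
  let ?v = "sup_meets ?J w"
  have "?v \<in> ?J"
    using sup_meets_in_lower_closure[OF neJ] lower_closure_closed[OF closed_lower_lower_closure[OF ne]]
    by simp
  moreover have "0 \<le> ?v" "?v \<le> w"
    using sup_meets_nonneg[OF _ w0] sup_meets_le[OF neJ] in_lower_closure[OF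
        set_plus_intro[OF in_lower_closure[OF ideal_zero[OF band_ideal[OF B]]] K(2)]]
    by simp_all
  moreover have "inf ?v (rabs b) = 0" if "b \<in> B" for b
  proof (rule antisym)
    have "inf ?v (rabs b) \<le> inf w (rabs b)"
      using \<open>?v \<le> w\<close> by (rule inf_mono) simp
    then show "inf ?v (rabs b) \<le> 0"
      using disjoint[OF that] by simp
    show "0 \<le> inf ?v (rabs b)"
      using \<open>0 \<le> ?v\<close> rabs_nonneg[of b] by simp
  qed
  ultimately have "?v \<in> K"
    by (intro disjoint_in_summand[OF B K]) auto
  then have "?v \<le> sup_meets K w"
    using le_sup_meets[of K ?v w] lower_closure_closed[OF K(1)] \<open>?v \<le> w\<close> K(2) by blast
  moreover have "inf w a \<le> ?v"
    by (rule inf_le_sup_meets[OF a])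
  ultimately show ?thesis
    by simp
qed

section \<open>Properties of the infinite part\<close>

lemma is_band_infinite_band_below:
  fixes p :: "'a::{ordered_real_vector,conditionally_complete_lattice} set set"
  shows "p \<in> Xs_pos \<Longrightarrow> is_band (infinite_band (below p))"
  using Xs_pos_iff closed_lower_below is_band_infinite_band by blast

lemma below_inf_part:
  fixes p :: "'a::{ordered_real_vector,conditionally_complete_lattice} set set"
  assumes "p \<in> Xs_pos"
  shows "inf_part p \<in> Xs" "below (inf_part p) = lower_closure (infinite_band (below p))"
  using below_infty[OF band_ideal[OF is_band_infinite_band_below[OF assms]]] inf_part_eq[OF assms]
  by simp_all

lemma inf_part_mono:
  fixes x y :: "'a::{ordered_real_vector,conditionally_complete_lattice} set set"
  assumes x: "x \<in> Xs_pos" and y: "y \<in> Xs_pos" and le: "sc_le x y"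
  shows "sc_le (inf_part x) (inf_part y)"
proof -
  have "below x \<subseteq> below y"
    using le x y by (simp add: sc_le_iff Xs_pos_iff)
  then have "infinite_band (below x) \<subseteq> lower_closure (infinite_band (below y))"
    using infinite_band_mono in_lower_closure by blast
  then have "lower_closure (infinite_band (below x)) \<subseteq> lower_closure (infinite_band (below y))"
    by (intro lower_closure_subset band_nonempty is_band_infinite_band_below x y)
  then show ?thesis
    using below_inf_part[OF x] below_inf_part[OF y] by (simp add: sc_le_iff)
qed

lemma inf_part_sc_inf:
  fixes x y :: "'a::{ordered_real_vector,conditionally_complete_lattice} set set"
  assumes x: "x \<in> Xs_pos" and y: "y \<in> Xs_pos"
  shows "inf_part (sc_inf x y) = sc_inf (inf_part x) (inf_part y)"
proof -
  have X: "x \<in> Xs" "0 \<in> below x" and Y: "y \<in> Xs" "0 \<in> below y"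
    using x y Xs_pos_iff by blast+
  note I = below_sc_inf[OF X(1) Y(1)]
  have xy: "sc_inf x y \<in> Xs_pos"
    using I X(2) Y(2) Xs_pos_iff by auto
  let ?Bx = "infinite_band (below x)" and ?By = "infinite_band (below y)"
  have "infinite_band (below (sc_inf x y)) = ?Bx \<inter> ?By"
    using I(2) infinite_band_Int by simp
  then have "lower_closure (infinite_band (below (sc_inf x y))) = lower_closure ?Bx \<inter> lower_closure ?By"
    unfolding set_eq_iff Int_iff band_lower_closure_iff[OF is_band_infinite_band_below[OF xy]]
      band_lower_closure_iff[OF is_band_infinite_band_below[OF x]]
      band_lower_closure_iff[OF is_band_infinite_band_below[OF y]]
    by simp
  then have "below (inf_part (sc_inf x y)) = below (sc_inf (inf_part x) (inf_part y))"
    using below_inf_part[OF xy] below_inf_part[OF x] below_inf_part[OF y]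
      below_sc_inf[OF below_inf_part(1)[OF x] below_inf_part(1)[OF y]]
    by simp
  then show ?thesis
    by (rule Xs_eqI[OF below_inf_part(1)[OF xy] below_sc_inf(1)[OF below_inf_part(1)[OF x] below_inf_part(1)[OF y]]])
qed

lemma infinite_band_nonpos:
  "infinite_band {v. v \<le> (0::'a::{ordered_real_vector,conditionally_complete_lattice})} = {0}"
proof (intro set_eqI iffI)
  fix z :: 'a assume "z \<in> infinite_band {v. v \<le> 0}"
  then have "real (1::nat) *\<^sub>R rabs z \<le> 0"
    unfolding infinite_band_def by blast
  then show "z \<in> {0}"
    using rabs_le_zero by simp
qed (simp add: infinite_band_def rabs_of_nonneg)

lemma inf_part_emb_zero: "inf_part (emb (0::'a::{ordered_real_vector,conditionally_complete_lattice})) = emb 0"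
proof -
  have zero: "emb (0::'a) \<in> Xs_pos"
    by (simp add: Xs_pos_iff below_emb)
  have "below (inf_part (emb (0::'a))) = below (emb 0)"
    by (simp add: below_inf_part(2)[OF zero] infinite_band_nonpos lower_closure_singleton below_emb)
  then show ?thesis
    by (rule Xs_eqI[OF below_inf_part(1)[OF zero] below_emb(2)])
qed

lemma inf_part_sc_scale:
  fixes x :: "'a::{ordered_real_vector,conditionally_complete_lattice} set set"
  assumes x: "x \<in> Xs_pos" and c: "0 \<le> c"
  shows "inf_part (sc_scale c x) = sc_scale c (inf_part x)"
proof (cases "c = 0")
  case True
  then show ?thesis
    using sc_scale_zero[of x] sc_scale_zero[OF below_inf_part(1)[OF x]] x
    by (simp add: Xs_pos_iff inf_part_emb_zero)
next
  case False
  then have c: "0 < c"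
    using c by simp
  have X: "x \<in> Xs" "0 \<in> below x"
    using x Xs_pos_iff by blast+
  note S = below_sc_scale[OF X(1) c]
  have "c *\<^sub>R 0 \<in> (\<lambda>w. c *\<^sub>R w) ` below x"
    using X(2) by (rule imageI)
  then have cx: "sc_scale c x \<in> Xs_pos"
    using S by (simp add: Xs_pos_iff)
  have "infinite_band (below (sc_scale c x)) = infinite_band (below x)"
    using S(2) infinite_band_scaleR[OF closed_lower_below[OF X(1)] c] by simp
  then have "below (inf_part (sc_scale c x)) = below (sc_scale c (inf_part x))"
    using below_inf_part[OF cx] below_inf_part[OF x] below_sc_scale[OF below_inf_part(1)[OF x] c]
      band_lower_closure_scaleR[OF is_band_infinite_band_below[OF x] c]
    by simp
  then show ?thesis
    using Xs_eqI below_inf_part(1)[OF cx] below_sc_scale(1)[OF below_inf_part(1)[OF x] c] by blast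
qed

lemma sc_sup_Xs_pos:
  fixes x y :: "'a::{ordered_real_vector,conditionally_complete_lattice} set set"
  assumes "x \<in> Xs_pos" "y \<in> Xs_pos"
  shows "sc_sup x y \<in> Xs_pos"
  using assms below_sc_sup(1,3)[of x y] by (auto simp: Xs_pos_iff)

lemma le_sup_sup_meets_summands:
  fixes w :: "'a::{ordered_real_vector,conditionally_complete_lattice}"
  assumes B: "is_band B" "closed_lower K" "0 \<in> K" "J = lower_closure (lower_closure B + K)"
    and C: "is_band C" "closed_lower L" "0 \<in> L" "J' = lower_closure (lower_closure C + L)"
    and w0: "0 \<le> w"
    and disjoint: "\<And>b. b \<in> B \<Longrightarrow> inf w (rabs b) = 0" "\<And>c. c \<in> C \<Longrightarrow> inf w (rabs c) = 0"
    and w: "w \<in> lower_closure (sup_set J J')"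
  shows "w \<le> sup (sup_meets K w) (sup_meets L w)"
proof -
  have "0 \<in> lower_closure B" "0 \<in> lower_closure C"
    using in_lower_closure ideal_zero band_ideal B(1) C(1) by blast+
  then have "0 + 0 \<in> lower_closure B + K" "0 + 0 \<in> lower_closure C + L"
    using set_plus_intro B(3) C(3) by blast+
  then have "0 + 0 \<in> J" "0 + 0 \<in> J'"
    unfolding B(4) C(4) using in_lower_closure by blast+
  then have ne: "sup_set J J' \<noteq> {}"
    using sup_setI by blast
  have "w = (SUP s\<in>sup_set J J'. inf w s)"
    using w by (rule lower_closure_eq)
  also have "\<dots> \<le> sup (sup_meets K w) (sup_meets L w)"
  proof (rule cSUP_least[OF ne])
    fix s assume "s \<in> sup_set J J'"
    then obtain a b where s: "s = sup a b" "a \<in> J" "b \<in> J'"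
      by (auto elim: sup_setE)
    have "inf w a \<le> sup_meets K w"
      using s(2) B(4) by (intro inf_le_sup_meets_summand[OF B(1-3) w0 disjoint(1)]) simp_all
    moreover have "inf w b \<le> sup_meets L w"
      using s(3) C(4) by (intro inf_le_sup_meets_summand[OF C(1-3) w0 disjoint(2)]) simp_all
    ultimately show "inf w s \<le> sup (sup_meets K w) (sup_meets L w)"
      unfolding s(1) inf_sup_distrib_group by (rule sup.mono)
  qed
  finally show ?thesis .
qed

text \<open>The band of infinite elements of \<open>x \<or> y\<close> is generated by those of \<open>x\<close> and \<open>y\<close>: the remainder
  of \<open>\<bar>z\<bar>\<close> after projecting onto both bands satisfies the hypothesis of \<open>archimedean_sup_meets\<close>.\<close>

lemma rabs_le_sup_band_components:
  fixes x y :: "'a::{ordered_real_vector,conditionally_complete_lattice} set set"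
  assumes x: "x \<in> Xs_pos" and y: "y \<in> Xs_pos" and z: "z \<in> infinite_band (below (sc_sup x y))"
  obtains P Q where "P \<in> infinite_band (below x)" "Q \<in> infinite_band (below y)" "rabs z \<le> sup P Q"
proof -
  let ?Bx = "infinite_band (below x)" and ?By = "infinite_band (below y)"
  have X: "x \<in> Xs" and Y: "y \<in> Xs"
    using x y Xs_pos_iff by blast+
  note Bx = is_band_infinite_band_below[OF x] and By = is_band_infinite_band_below[OF y]
  obtain P where P: "P \<in> ?Bx" "0 \<le> P" "P \<le> rabs z" "\<And>b. b \<in> ?Bx \<Longrightarrow> inf (rabs z - P) (rabs b) = 0"
    using band_projection[OF Bx rabs_nonneg] by blast
  obtain Q where Q: "Q \<in> ?By" "0 \<le> Q" "Q \<le> rabs z" "\<And>b. b \<in> ?By \<Longrightarrow> inf (rabs z - Q) (rabs b) = 0"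
    using band_projection[OF By rabs_nonneg] by blast
  let ?r = "rabs z - sup P Q"
  have r0: "0 \<le> ?r" and rz: "?r \<le> rabs z"
    using P(2,3) Q(2,3) by (simp_all add: le_supI1)
  have disjoint_from: "inf ?r (rabs b) = 0"
    if "inf (rabs z - R) (rabs b) = 0" "R \<le> sup P Q" for R b
  proof (rule antisym)
    have "inf ?r (rabs b) \<le> inf (rabs z - R) (rabs b)"
      using that(2) by (intro inf_mono diff_left_mono) simp_all
    then show "inf ?r (rabs b) \<le> 0"
      using that(1) by simp
  qed (use r0 rabs_nonneg in simp)
  obtain ux where ux: "ux \<in> Xu_pos" "x = sc_add (infty ?Bx) ux"
    using decomposition_exists[OF x] by blast
  obtain uy where uy: "uy \<in> Xu_pos" "y = sc_add (infty ?By) uy"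
    using decomposition_exists[OF y] by blast
  have Ux: "ux \<in> Xs" "0 \<in> below ux" "\<And>z. 0 \<le> z \<Longrightarrow> (\<And>n::nat. real n *\<^sub>R z \<in> below ux) \<Longrightarrow> z = 0"
    using ux(1) Xu_pos_iff by blast+
  have Uy: "uy \<in> Xs" "0 \<in> below uy" "\<And>z. 0 \<le> z \<Longrightarrow> (\<And>n::nat. real n *\<^sub>R z \<in> below uy) \<Longrightarrow> z = 0"
    using uy(1) Xu_pos_iff by blast+
  have "real n *\<^sub>R ?r \<le> sup (sup_meets (below ux) (real n *\<^sub>R ?r)) (sup_meets (below uy) (real n *\<^sub>R ?r))"
    for n :: nat
  proof (rule le_sup_sup_meets_summands[OF Bx closed_lower_below[OF Ux(1)] Ux(2) _
        By closed_lower_below[OF Uy(1)] Uy(2)])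
    show "below x = lower_closure (lower_closure ?Bx + below ux)"
      using below_sc_add_infty(2)[OF Bx Ux(1)] ux(2) by simp
    show "below y = lower_closure (lower_closure ?By + below uy)"
      using below_sc_add_infty(2)[OF By Uy(1)] uy(2) by simp
    show "0 \<le> real n *\<^sub>R ?r"
      using r0 by (simp add: scaleR_nonneg_nonneg)
    show "inf (real n *\<^sub>R ?r) (rabs b) = 0" if "b \<in> ?Bx" for b
      using disjoint_scaleR_nat[OF r0 rabs_nonneg disjoint_from[OF P(4)[OF that] sup_ge1]] .
    show "inf (real n *\<^sub>R ?r) (rabs b) = 0" if "b \<in> ?By" for b
      using disjoint_scaleR_nat[OF r0 rabs_nonneg disjoint_from[OF Q(4)[OF that] sup_ge2]] .
    have "real n *\<^sub>R ?r \<le> real n *\<^sub>R rabs z"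
      using rz by (intro scaleR_left_mono) auto
    moreover have "real n *\<^sub>R rabs z \<in> below (sc_sup x y)"
      using z by (simp add: infinite_band_def)
    ultimately show "real n *\<^sub>R ?r \<in> lower_closure (sup_set (below x) (below y))"
      using closed_lower_down[OF closed_lower_below[OF below_sc_sup(1)[OF X Y]]] below_sc_sup(2)[OF X Y]
      by auto
  qed
  then have "?r = 0"
    by (intro archimedean_sup_meets[OF closed_lower_below[OF Ux(1)] Ux(2,3) closed_lower_below[OF Uy(1)] Uy(2,3) r0])
  then show ?thesis
    using that P(1) Q(1) by simp
qed

lemma lower_closure_infinite_band_below_sc_sup:
  fixes x y :: "'a::{ordered_real_vector,conditionally_complete_lattice} set set"
  assumes x: "x \<in> Xs_pos" and y: "y \<in> Xs_pos"
  defines "Bx \<equiv> infinite_band (below x)" and "By \<equiv> infinite_band (below y)"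
  shows "lower_closure (infinite_band (below (sc_sup x y)))
    = lower_closure (sup_set (lower_closure Bx) (lower_closure By))"
proof (rule lower_closure_eqI)
  let ?B = "infinite_band (below (sc_sup x y))"
  let ?T = "sup_set (lower_closure Bx) (lower_closure By)"
  have X: "x \<in> Xs" and Y: "y \<in> Xs"
    using x y Xs_pos_iff by blast+
  note band_x = is_band_infinite_band_below[OF x, folded Bx_def]
    and band_y = is_band_infinite_band_below[OF y, folded By_def]
    and B = is_band_infinite_band_below[OF sc_sup_Xs_pos[OF x y]]
  have "0 \<in> lower_closure Bx" "0 \<in> lower_closure By"
    using in_lower_closure ideal_zero band_ideal band_x band_y by blast+
  then show "?T \<noteq> {}"
    using sup_setI by blast
  show "?B \<noteq> {}"
    by (rule band_nonempty[OF B])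
  show "?B \<subseteq> lower_closure ?T"
  proof
    fix z assume "z \<in> ?B"
    then obtain P Q where PQ: "P \<in> Bx" "Q \<in> By" "rabs z \<le> sup P Q"
      using rabs_le_sup_band_components[OF x y] unfolding Bx_def By_def by blast
    then have "sup P Q \<in> ?T"
      by (intro sup_setI in_lower_closure)
    moreover have "z \<le> sup P Q"
      using rabs_ge(1)[of z] PQ(3) by (rule order_trans)
    ultimately show "z \<in> lower_closure ?T"
      by (rule lower_closureI)
  qed
  have BxB: "Bx \<subseteq> ?B" and ByB: "By \<subseteq> ?B"
    unfolding Bx_def By_def using infinite_band_mono below_sc_sup(3,4)[OF X Y] by blast+
  show "?T \<subseteq> lower_closure ?B"
  proof
    fix s assume "s \<in> ?T"
    then obtain a b where s: "s = sup a b" "a \<in> lower_closure Bx" "b \<in> lower_closure By"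
      by (auto elim: sup_setE)
    have "sup a 0 \<in> ?B" "sup b 0 \<in> ?B"
      using s(2,3) BxB ByB band_lower_closure_iff[OF band_x] band_lower_closure_iff[OF band_y] by blast+
    then have "sup a 0 + sup b 0 \<in> ?B"
      by (rule ideal_add[OF band_ideal[OF B]])
    then show "s \<in> lower_closure ?B"
      unfolding s(1) by (rule lower_closureI[OF _ sup_le_sup_zero_add])
  qed
qed

lemma inf_part_sc_sup:
  fixes x y :: "'a::{ordered_real_vector,conditionally_complete_lattice} set set"
  assumes x: "x \<in> Xs_pos" and y: "y \<in> Xs_pos"
  shows "inf_part (sc_sup x y) = sc_sup (inf_part x) (inf_part y)"
proof -
  note xy = sc_sup_Xs_pos[OF x y]
  note S = below_sc_sup[OF below_inf_part(1)[OF x] below_inf_part(1)[OF y]]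
  have "below (inf_part (sc_sup x y)) = below (sc_sup (inf_part x) (inf_part y))"
    using below_inf_part(2)[OF xy] below_inf_part(2)[OF x] below_inf_part(2)[OF y] S(2)
      lower_closure_infinite_band_below_sc_sup[OF x y]
    by simp
  then show ?thesis
    by (rule Xs_eqI[OF below_inf_part(1)[OF xy] S(1)])
qed

lemma sc_add_Xs_pos:
  fixes x y :: "'a::{ordered_real_vector,conditionally_complete_lattice} set set"
  assumes "x \<in> Xs_pos" "y \<in> Xs_pos"
  shows "sc_add x y \<in> Xs_pos"
proof -
  have X: "x \<in> Xs" "0 \<in> below x" and Y: "y \<in> Xs" "0 \<in> below y"
    using assms Xs_pos_iff by blast+
  have "0 + 0 \<in> below x + below y"
    using X(2) Y(2) by (rule set_plus_intro)
  then show ?thesis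
    using below_sc_add[OF X(1) Y(1)] in_lower_closure by (simp add: Xs_pos_iff)
qed

lemma below_sc_sup_subset_below_sc_add:
  fixes x y :: "'a::{ordered_real_vector,conditionally_complete_lattice} set set"
  assumes "x \<in> Xs_pos" "y \<in> Xs_pos"
  shows "below (sc_sup x y) \<subseteq> below (sc_add x y)"
proof -
  have X: "x \<in> Xs" "0 \<in> below x" and Y: "y \<in> Xs" "0 \<in> below y"
    using assms Xs_pos_iff by blast+
  note A = below_sc_add[OF X(1) Y(1)]
  have "sup_set (below x) (below y) \<subseteq> below (sc_add x y)"
  proof
    fix s assume "s \<in> sup_set (below x) (below y)"
    then obtain a b where s: "s = sup a b" "a \<in> below x" "b \<in> below y"
      by (auto elim: sup_setE)
    have sum: "sup a 0 + sup b 0 \<in> below x + below y"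
      using closed_lower_sup[OF closed_lower_below[OF X(1)] s(2) X(2)]
        closed_lower_sup[OF closed_lower_below[OF Y(1)] s(3) Y(2)]
      by (rule set_plus_intro)
    show "s \<in> below (sc_add x y)"
      unfolding A(2) s(1) by (rule lower_closureI[OF sum sup_le_sup_zero_add])
  qed
  then show ?thesis
    using lower_closure_least[OF sup_set_nonempty closed_lower_below[OF A(1)]] X(2) Y(2)
      below_sc_sup(2)[OF X(1) Y(1)]
    by blast
qed

lemma below_sc_add_subset_scaleR_below_sc_sup:
  fixes x y :: "'a::{ordered_real_vector,conditionally_complete_lattice} set set"
  assumes X: "x \<in> Xs" "0 \<in> below x" and Y: "y \<in> Xs" "0 \<in> below y"
  shows "below (sc_add x y) \<subseteq> (\<lambda>w. (2::real) *\<^sub>R w) ` below (sc_sup x y)"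
proof -
  note S = below_sc_sup[OF X(1) Y(1)]
  note S2 = below_sc_scale[OF S(1), of 2]
  have C2: "closed_lower ((\<lambda>w. (2::real) *\<^sub>R w) ` below (sc_sup x y))"
    using closed_lower_below[OF S2(1)] S2(2) by simp
  have "below x + below y \<subseteq> (\<lambda>w. (2::real) *\<^sub>R w) ` below (sc_sup x y)"
  proof
    fix s assume "s \<in> below x + below y"
    then obtain a b where s: "s = a + b" "a \<in> below x" "b \<in> below y"
      by (auto elim: set_plus_elim)
    have "sup a b \<in> below (sc_sup x y)"
      using S(2) in_lower_closure[OF sup_setI[OF s(2,3)]] by simp
    then have two: "(2::real) *\<^sub>R sup a b \<in> (\<lambda>w. (2::real) *\<^sub>R w) ` below (sc_sup x y)"
      by (rule imageI)
    show "s \<in> (\<lambda>w. (2::real) *\<^sub>R w) ` below (sc_sup x y)"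
      unfolding s(1) by (rule closed_lower_down[OF C2 two add_le_two_sup])
  qed
  moreover have "below x + below y \<noteq> {}"
    using set_plus_intro[OF X(2) Y(2)] by blast
  ultimately show ?thesis
    using lower_closure_least[OF _ C2] below_sc_add(2)[OF X(1) Y(1)] by simp
qed

lemma infinite_band_below_sc_add:
  fixes x y :: "'a::{ordered_real_vector,conditionally_complete_lattice} set set"
  assumes x: "x \<in> Xs_pos" and y: "y \<in> Xs_pos"
  shows "infinite_band (below (sc_add x y)) = infinite_band (below (sc_sup x y))"
proof (rule antisym)
  have X: "x \<in> Xs" "0 \<in> below x" and Y: "y \<in> Xs" "0 \<in> below y"
    using x y Xs_pos_iff by blast+
  have "infinite_band (below (sc_add x y))
      \<subseteq> infinite_band ((\<lambda>w. (2::real) *\<^sub>R w) ` below (sc_sup x y))"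
    by (rule infinite_band_mono[OF below_sc_add_subset_scaleR_below_sc_sup[OF X Y]])
  also have "\<dots> = infinite_band (below (sc_sup x y))"
    by (rule infinite_band_scaleR[OF closed_lower_below[OF below_sc_sup(1)[OF X(1) Y(1)]]]) simp
  finally show "infinite_band (below (sc_add x y)) \<subseteq> infinite_band (below (sc_sup x y))" .
  show "infinite_band (below (sc_sup x y)) \<subseteq> infinite_band (below (sc_add x y))"
    by (rule infinite_band_mono[OF below_sc_sup_subset_below_sc_add[OF x y]])
qed

lemma lower_closure_band_plus_band:
  fixes B C :: "'a::{ordered_real_vector,conditionally_complete_lattice} set"
  assumes B: "is_band B" and C: "is_band C"
  shows "lower_closure (lower_closure B + lower_closure C)
    = lower_closure (sup_set (lower_closure B) (lower_closure C))"
proof -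
  let ?Sum = "lower_closure B + lower_closure C" and ?Sup = "sup_set (lower_closure B) (lower_closure C)"
  have pos: "sup a 0 \<in> B" "sup b 0 \<in> C" if "a \<in> lower_closure B" "b \<in> lower_closure C" for a b
    using that band_lower_closure_iff[OF B] band_lower_closure_iff[OF C] by blast+
  have zero: "0 \<in> lower_closure B" "0 \<in> lower_closure C"
    using in_lower_closure ideal_zero band_ideal B C by blast+
  show ?thesis
  proof (rule lower_closure_eqI)
    show "?Sum \<noteq> {}"
      using set_plus_intro[OF zero] by blast
    show "?Sup \<noteq> {}"
      using sup_setI[OF zero] by blast
    show "?Sum \<subseteq> lower_closure ?Sup"
    proof
      fix s assume "s \<in> ?Sum"
      then obtain a b where s: "s = a + b" "a \<in> lower_closure B" "b \<in> lower_closure C"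
        by (auto elim: set_plus_elim)
      have "s \<le> sup a 0 + sup b 0"
        using s(1) by (simp add: add_mono)
      also have "\<dots> \<le> (2::real) *\<^sub>R sup (sup a 0) (sup b 0)"
        by (rule add_le_two_sup)
      also have "\<dots> = sup ((2::real) *\<^sub>R sup a 0) ((2::real) *\<^sub>R sup b 0)"
        by (rule scaleR_sup_pos) simp
      finally have le: "s \<le> sup ((2::real) *\<^sub>R sup a 0) ((2::real) *\<^sub>R sup b 0)" .
      have "(2::real) *\<^sub>R sup a 0 \<in> lower_closure B" "(2::real) *\<^sub>R sup b 0 \<in> lower_closure C"
        using pos[OF s(2,3)] ideal_scaleR[OF band_ideal[OF B]] ideal_scaleR[OF band_ideal[OF C]]
          in_lower_closure by blast+
      then show "s \<in> lower_closure ?Sup"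
        by (rule lower_closureI[OF sup_setI le])
    qed
    show "?Sup \<subseteq> lower_closure ?Sum"
    proof
      fix s assume "s \<in> ?Sup"
      then obtain a b where s: "s = sup a b" "a \<in> lower_closure B" "b \<in> lower_closure C"
        by (auto elim: sup_setE)
      have "sup a 0 + sup b 0 \<in> ?Sum"
        using pos[OF s(2,3)] by (intro set_plus_intro in_lower_closure)
      then show "s \<in> lower_closure ?Sum"
        unfolding s(1) by (rule lower_closureI[OF _ sup_le_sup_zero_add])
    qed
  qed
qed

lemma sc_add_infty_eq_sc_sup:
  fixes B C :: "'a::{ordered_real_vector,conditionally_complete_lattice} set"
  assumes B: "is_band B" and C: "is_band C"
  shows "sc_add (infty B) (infty C) = sc_sup (infty B) (infty C)"
proof -
  note IB = below_infty[OF band_ideal[OF B]] and IC = below_infty[OF band_ideal[OF C]]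
  have "below (sc_add (infty B) (infty C)) = below (sc_sup (infty B) (infty C))"
    using below_sc_add(2)[OF IB(1) IC(1)] below_sc_sup(2)[OF IB(1) IC(1)] IB(2) IC(2)
      lower_closure_band_plus_band[OF B C]
    by simp
  then show ?thesis
    by (rule Xs_eqI[OF below_sc_add(1)[OF IB(1) IC(1)] below_sc_sup(1)[OF IB(1) IC(1)]])
qed

theorem propositionS16:
  fixes x y :: "'a::{ordered_real_vector, conditionally_complete_lattice} set set"
    and c :: real
  assumes "x \<in> Xs_pos" and "y \<in> Xs_pos" and "0 \<le> c"
  shows "inf_part (sc_add x y) = sc_add (inf_part x) (inf_part y)
       \<and> inf_part (sc_scale c x) = sc_scale c (inf_part x)
       \<and> (sc_le x y \<longrightarrow> sc_le (inf_part x) (inf_part y))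
       \<and> inf_part (sc_sup x y) = sc_sup (inf_part x) (inf_part y)
       \<and> inf_part (sc_inf x y) = sc_inf (inf_part x) (inf_part y)"
proof -
  note x = assms(1) and y = assms(2)
  have sup: "inf_part (sc_sup x y) = sc_sup (inf_part x) (inf_part y)"
    by (rule inf_part_sc_sup[OF x y])
  have "inf_part (sc_add x y) = inf_part (sc_sup x y)"
    using inf_part_eq[OF sc_add_Xs_pos[OF x y]] inf_part_eq[OF sc_sup_Xs_pos[OF x y]]
      infinite_band_below_sc_add[OF x y]
    by simp
  also have "\<dots> = sc_add (inf_part x) (inf_part y)"
    using sup sc_add_infty_eq_sc_sup[OF is_band_infinite_band_below[OF x] is_band_infinite_band_below[OF y]]
    by (simp add: inf_part_eq[OF x] inf_part_eq[OF y])
  finally show ?thesis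
    using sup inf_part_sc_scale[OF x assms(3)] inf_part_mono[OF x y] inf_part_sc_inf[OF x y] by blast
qed

end
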